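(* Assume $\lim_{t\to\infty}g(t)=\infty$ and $\lim_{t\to\infty}g'(t)/g(t)^2=0$. Then $Y$ is bounded in $L^2$, i.e. $\sup_{t\ge0}\mathbb{E}|Y_t|^2<\infty$.
   Context: Let $d\ge1$ and $B$ a standard $d$-dimensional Brownian motion. The potential $V:\mathbb{R}^d\to[0,\infty)$ is $C^2$ and $V=W+\chi$, where $\chi$ is compactly supported with $\nabla\chi$ Lipschitz and there is $c>0$ with $\nabla^2W(x)\ge c\,\mathrm{Id}$ for all $x$; moreover there is $a>0$ with $\Delta V(x)\le a(1+V(x))$ for all $x$ and $|\nabla V(x)|^2/V(x)\to\infty$ as $|x|\to\infty$. $V$ has finitely many critical points; its local minima have positive definite Hessian, and at each other critical point $\nabla^2V$ has a negative eigenvalue. The function $g:[0,\infty)\to(0,\infty)$ is $C^1$ and non-decreasing. Fix $x\in\mathbb{R}^d$, $r>0$, a probability measure $\mu$ with mean $\bar\mu$. $Y$ is the solution of $\mathrm{d}Y_t=\mathrm{d}B_t-g(t)\nabla V(Y_t)\mathrm{d}t-\frac{Y_t}{r+t}\mathrm{d}t$, $Y_0=x-\bar\mu$. *)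

theory Defs
  imports "HOL-Probability.Probability"
begin

definition gaussian_iso :: "real \<Rightarrow> 'd::euclidean_space measure" where
  "gaussian_iso v = density lborel
     (\<lambda>y::'d. ennreal ((2 * pi * v) powr (- real DIM('d) / 2) * exp (- (norm y)\<^sup>2 / (2 * v))))"

definition std_brownian_motion :: "'a measure \<Rightarrow> (real \<Rightarrow> 'a \<Rightarrow> 'd::euclidean_space) \<Rightarrow> bool" where
  "std_brownian_motion M B \<longleftrightarrow>
     prob_space M \<and>
     (\<forall>t\<ge>0. B t \<in> borel_measurable M) \<and>
     (AE \<omega> in M. B 0 \<omega> = 0 \<and> continuous_on {0..} (\<lambda>t. B t \<omega>)) \<and>
     (\<forall>(ts::nat \<Rightarrow> real) n. 0 \<le> ts 0 \<and> (\<forall>k<n. ts k < ts (Suc k)) \<longrightarrow>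
        prob_space.indep_vars M (\<lambda>_. borel) (\<lambda>k \<omega>. B (ts (Suc k)) \<omega> - B (ts k) \<omega>) {..<n}) \<and>
     (\<forall>s t. 0 \<le> s \<and> s < t \<longrightarrow> distr M borel (\<lambda>\<omega>. B t \<omega> - B s \<omega>) = gaussian_iso (t - s))"

definition laplacian_of :: "('d::euclidean_space \<Rightarrow>\<^sub>L 'd) \<Rightarrow> real" where
  "laplacian_of H = (\<Sum>b\<in>Basis. b \<bullet> blinfun_apply H b)"

definition is_local_min :: "('d::euclidean_space \<Rightarrow> real) \<Rightarrow> 'd \<Rightarrow> bool" where
  "is_local_min f x \<longleftrightarrow> (\<exists>e>0. \<forall>y\<in>ball x e. f x \<le> f y)"

end

theory Submission
  imports Defs
begin

text \<open>Since V = W + chi with W strongly convex and chi compactly supported, the gradient of V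
  is dissipative: (y - u) \<bullet> DV y \<ge> c/2 |y - u|^2 - K |y - u| - V u - 2 S. On a time window
  [\<tau>, T], the path Z = Y - (B - B \<tau>) solves an ODE, and dissipativity with u = B - B \<tau>
  yields d|Z|^2 \<le> -(c/2) g |Z|^2 + g H(B - B \<tau>), with a source H growing like V. The
  Laplacian bound controls the Hessian of V, so V grows at most exponentially and H at most
  like exp (|u|^2 / 4), whose expectation under a Gaussian of variance \<le> 1 is at most 2^(d/2).
  Over a unit window this gives E|Y t|^2 \<le> q E|Y (t - 1)|^2 + C with q < 1, because
  g \<ge> g 0 > 0, and the bound follows by iteration.\<close>

lemma cosh_comparison:
  fixes f f1 f2 :: "real \<Rightarrow> real" and k :: real
  assumes k: "k > 0"
    and d1: "\<And>s. (f has_real_derivative f1 s) (at s)"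
    and d2: "\<And>s. (f1 has_real_derivative f2 s) (at s)"
    and ineq: "\<And>s. s \<ge> 0 \<Longrightarrow> f2 s \<le> k\<^sup>2 * f s"
    and s: "s \<ge> 0"
  shows "f s \<le> f 0 * cosh (k * s) + f1 0 * sinh (k * s) / k"
proof -
  \<comment> \<open>q is the Wronskian of cosh (k t) and f; it decreases because f'' \<le> k^2 f.\<close>
  define q where "q t = f1 t * cosh (k * t) - k * f t * sinh (k * t)" for t
  define p where "p t = f t / cosh (k * t) - f1 0 / k * (sinh (k * t) / cosh (k * t))" for t
  have dq: "(q has_real_derivative (f2 t - k\<^sup>2 * f t) * cosh (k * t)) (at t)" for t
    unfolding q_def
    by (auto intro!: derivative_eq_intros d1 d2 simp: power2_eq_square algebra_simps)
  have q_le: "q t \<le> f1 0" if "t \<ge> 0" for t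
  proof -
    have "q t \<le> q 0"
      by (rule DERIV_nonpos_imp_nonincreasing[OF that])
        (use dq ineq in \<open>intro exI conjI, blast, simp add: mult_nonpos_nonneg\<close>)
    thus ?thesis by (simp add: q_def)
  qed
  have dtanh: "((\<lambda>t. sinh (k * t) / cosh (k * t)) has_real_derivative k / (cosh (k * t))\<^sup>2) (at t)" for t
  proof -
    have "((\<lambda>t. sinh (k * t) / cosh (k * t)) has_real_derivative
        (cosh (k * t) * k * cosh (k * t) - sinh (k * t) * (sinh (k * t) * k)) / (cosh (k * t) * cosh (k * t))) (at t)"
      by (rule derivative_eq_intros refl | simp)+
    thus ?thesis using cosh_square_eq[of "k * t"] by (simp add: power2_eq_square algebra_simps)
  qed
  have df: "((\<lambda>t. f t / cosh (k * t)) has_real_derivative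
        (f1 t * cosh (k * t) - f t * (sinh (k * t) * k)) / (cosh (k * t) * cosh (k * t))) (at t)" for t
    by (rule derivative_eq_intros refl d1 | simp)+
  have dp: "(p has_real_derivative (q t - f1 0) / (cosh (k * t))\<^sup>2) (at t)" for t
  proof -
    have "(p has_real_derivative (f1 t * cosh (k * t) - f t * (sinh (k * t) * k)) / (cosh (k * t) * cosh (k * t))
        - f1 0 / k * (k / (cosh (k * t))\<^sup>2)) (at t)"
      unfolding p_def by (intro DERIV_diff DERIV_cmult df dtanh)
    moreover have "(f1 t * cosh (k * t) - f t * (sinh (k * t) * k)) / (cosh (k * t) * cosh (k * t))
        - f1 0 / k * (k / (cosh (k * t))\<^sup>2) = (q t - f1 0) / (cosh (k * t))\<^sup>2"
      using k by (simp add: q_def power2_eq_square field_simps)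
    ultimately show ?thesis by simp
  qed
  have "p s \<le> p 0"
    by (rule DERIV_nonpos_imp_nonincreasing[OF s])
      (use dp q_le in \<open>intro exI conjI, blast, simp add: divide_nonpos_pos\<close>)
  thus ?thesis using k by (simp add: p_def field_simps)
qed

lemma hessian_bound_along_ray:
  fixes f :: "'d::real_inner \<Rightarrow> real" and Df :: "'d \<Rightarrow> 'd" and D2f :: "'d \<Rightarrow> ('d \<Rightarrow>\<^sub>L 'd)"
  assumes grad: "\<And>y. (f has_derivative (\<lambda>h. Df y \<bullet> h)) (at y)"
    and hess: "\<And>y. (Df has_derivative blinfun_apply (D2f y)) (at y)"
    and quad: "\<And>y. blinfun_apply (D2f y) u \<bullet> u \<le> k\<^sup>2 * (f y + b)"
    and k: "k > 0" and t: "t \<ge> 0"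
  shows "f (t *\<^sub>R u) + b \<le> (\<bar>f 0 + b\<bar> + \<bar>Df 0 \<bullet> u\<bar> / k) * exp (k * t)"
proof -
  define F where "F t = f (t *\<^sub>R u) + b" for t
  have ray: "((\<lambda>t. t *\<^sub>R u) has_derivative (\<lambda>h. h *\<^sub>R u)) (at t)" for t
    by (auto intro!: derivative_eq_intros)
  have "((\<lambda>t. f (t *\<^sub>R u)) has_real_derivative (Df (t *\<^sub>R u) \<bullet> u)) (at t)" for t
    unfolding has_field_derivative_def
    by (rule has_derivative_eq_rhs[OF has_derivative_compose[OF ray grad]]) (simp add: fun_eq_iff mult.commute)
  hence d1: "(F has_real_derivative (Df (t *\<^sub>R u) \<bullet> u)) (at t)" for t
    unfolding F_def using DERIV_add[OF _ DERIV_const] by fastforce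
  have d2: "((\<lambda>t. Df (t *\<^sub>R u) \<bullet> u) has_real_derivative (blinfun_apply (D2f (t *\<^sub>R u)) u \<bullet> u)) (at t)" for t
  proof -
    have "((\<lambda>t. Df (t *\<^sub>R u) \<bullet> u) has_derivative (\<lambda>h. blinfun_apply (D2f (t *\<^sub>R u)) (h *\<^sub>R u) \<bullet> u)) (at t)"
      using has_derivative_compose[OF ray hess] by (auto intro!: derivative_eq_intros)
    thus ?thesis unfolding has_field_derivative_def
      by (rule has_derivative_eq_rhs) (simp add: fun_eq_iff blinfun.scaleR_right mult.commute)
  qed
  have ineq: "blinfun_apply (D2f (t *\<^sub>R u)) u \<bullet> u \<le> k\<^sup>2 * F t" for t
    using quad[of "t *\<^sub>R u"] by (simp add: F_def)
  define z where "z = k * t"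
  have sc: "0 \<le> sinh z" "0 \<le> cosh z" "cosh z + sinh z = exp z"
    using k t by (simp_all add: z_def cosh_plus_sinh)
  have "F t \<le> F 0 * cosh z + (Df 0 \<bullet> u) * sinh z / k"
    using cosh_comparison[OF k d1 d2 ineq t] by (simp add: z_def)
  also have "\<dots> \<le> \<bar>F 0\<bar> * cosh z + \<bar>Df 0 \<bullet> u\<bar> * sinh z / k"
    using sc k by (intro add_mono divide_right_mono mult_right_mono) auto
  also have "\<dots> \<le> \<bar>F 0\<bar> * exp z + \<bar>Df 0 \<bullet> u\<bar> * exp z / k"
  proof -
    have "cosh z \<le> exp z" "sinh z \<le> exp z" using sc by linarith+
    thus ?thesis using k by (intro add_mono mult_left_mono divide_right_mono) auto
  qed
  finally show ?thesis by (simp add: F_def z_def algebra_simps)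
qed

lemma exp_growth_of_hessian_bound:
  fixes f :: "'d::real_inner \<Rightarrow> real" and Df :: "'d \<Rightarrow> 'd" and D2f :: "'d \<Rightarrow> ('d \<Rightarrow>\<^sub>L 'd)"
  assumes grad: "\<And>y. (f has_derivative (\<lambda>h. Df y \<bullet> h)) (at y)"
    and hess: "\<And>y. (Df has_derivative blinfun_apply (D2f y)) (at y)"
    and quad: "\<And>y u. norm u = 1 \<Longrightarrow> blinfun_apply (D2f y) u \<bullet> u \<le> \<alpha> * f y + \<beta>"
    and alpha: "\<alpha> > 0"
  shows "\<exists>C\<ge>0. \<forall>y. f y \<le> C * exp (sqrt \<alpha> * norm y)"
proof -
  define k where "k = sqrt \<alpha>"
  have k: "k > 0" "k\<^sup>2 = \<alpha>" using alpha by (auto simp: k_def)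
  define C where "C = \<bar>f 0 + \<beta> / \<alpha>\<bar> + norm (Df 0) / k + \<bar>\<beta> / \<alpha>\<bar>"
  have "f y \<le> C * exp (k * norm y)" for y
  proof (cases "y = 0")
    case True
    have "norm (Df 0) / k \<ge> 0" using k by simp
    hence "f 0 \<le> C" unfolding C_def by linarith
    thus ?thesis using True by simp
  next
    case False
    define u where "u = y /\<^sub>R norm y"
    have u: "norm u = 1" "y = norm y *\<^sub>R u" using False by (simp_all add: u_def)
    have "blinfun_apply (D2f z) u \<bullet> u \<le> k\<^sup>2 * (f z + \<beta> / \<alpha>)" for z
      using quad[OF u(1), of z] alpha k by (simp add: algebra_simps)
    from hessian_bound_along_ray[OF grad hess this k(1) norm_ge_zero, of y]
    have "f y + \<beta> / \<alpha> \<le> (\<bar>f 0 + \<beta> / \<alpha>\<bar> + \<bar>Df 0 \<bullet> u\<bar> / k) * exp (k * norm y)"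
      using u(2) by metis
    also have "\<dots> \<le> (\<bar>f 0 + \<beta> / \<alpha>\<bar> + norm (Df 0) / k) * exp (k * norm y)"
      using Cauchy_Schwarz_ineq2[of "Df 0" u] u(1) k by (intro mult_right_mono add_mono divide_right_mono) auto
    finally have "f y + \<beta> / \<alpha> \<le> (\<bar>f 0 + \<beta> / \<alpha>\<bar> + norm (Df 0) / k) * exp (k * norm y)" .
    moreover have "- (\<beta> / \<alpha>) \<le> \<bar>\<beta> / \<alpha>\<bar> * 1" by (simp only: mult_1_right abs_ge_minus_self)
    moreover have "\<bar>\<beta> / \<alpha>\<bar> * 1 \<le> \<bar>\<beta> / \<alpha>\<bar> * exp (k * norm y)" using k by (intro mult_left_mono) auto
    ultimately show ?thesis unfolding C_def distrib_right by linarith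
  qed
  moreover have "C \<ge> 0" using k by (simp add: C_def)
  ultimately show ?thesis by (auto simp: k_def)
qed

lemma has_derivative_norm_le_lipschitz:
  fixes f :: "'a::real_normed_vector \<Rightarrow> 'b::real_normed_vector"
  assumes d: "(f has_derivative f') (at y)" and L: "\<And>z w. norm (f z - f w) \<le> L * norm (z - w)"
  shows "norm (f' h) \<le> L * norm h"
proof (cases "h = 0")
  case True
  thus ?thesis using d by (simp add: has_derivative_linear linear_0)
next
  case False
  have bl: "bounded_linear f'" using d by (simp add: has_derivative_bounded_linear)
  have key: "norm (f' h) \<le> (L + e) * norm h" if e: "e > 0" for e
  proof -
    obtain d where dpos: "d > 0"
      and dd: "\<And>z. norm (z - y) < d \<Longrightarrow> norm (f z - f y - f' (z - y)) \<le> e * norm (z - y)"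
      using d e unfolding has_derivative_at_alt by blast
    define t where "t = d / (2 * norm h)"
    have t: "t > 0" "t * norm h < d" using dpos False by (simp_all add: t_def)
    have a: "norm (f (y + t *\<^sub>R h) - f y - f' (t *\<^sub>R h)) \<le> e * (t * norm h)"
      using dd[of "y + t *\<^sub>R h"] t by simp
    have b: "norm (f (y + t *\<^sub>R h) - f y) \<le> L * (t * norm h)" using L[of "y + t *\<^sub>R h" y] t by simp
    have "norm (f' (t *\<^sub>R h)) \<le> norm (f (y + t *\<^sub>R h) - f y) + norm (f (y + t *\<^sub>R h) - f y - f' (t *\<^sub>R h))"
      by (rule order_trans[OF _ norm_triangle_ineq4]) simp
    also have "\<dots> \<le> (L + e) * (t * norm h)" using a b by (simp add: algebra_simps)
    finally have "t * norm (f' h) \<le> t * ((L + e) * norm h)"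
      using t by (simp add: linear_scale[OF bounded_linear.linear[OF bl]] algebra_simps)
    thus ?thesis using t by simp
  qed
  have "norm (f' h) \<le> L * norm h + e" if "e > 0" for e
    using key[of "e / norm h"] False that by (auto simp: algebra_simps)
  thus ?thesis by (meson field_le_epsilon)
qed

lemma psd_form_le_dim_trace:
  fixes f :: "'d::euclidean_space \<Rightarrow> 'd"
  assumes lin: "linear f" and psd: "\<And>h. f h \<bullet> h \<ge> 0" and u: "norm u \<le> 1"
  shows "f u \<bullet> u \<le> real DIM('d) * (\<Sum>b\<in>Basis. f b \<bullet> b)"
proof -
  define w where "w b b' = f b \<bullet> b'" for b b'
  define x where "x b = u \<bullet> b" for b
  have xb: "\<bar>x b\<bar> \<le> 1" if "b \<in> Basis" for b
    using Basis_le_norm[OF that, of u] u by (simp add: x_def inner_commute)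
  have expand: "f u \<bullet> u = (\<Sum>b\<in>Basis. \<Sum>b'\<in>Basis. x b * x b' * w b b')"
  proof -
    have u_eq: "u = (\<Sum>b\<in>Basis. x b *\<^sub>R b)"
      using euclidean_representation[of u] by (simp add: x_def inner_commute)
    have "f u \<bullet> u = (\<Sum>b\<in>Basis. x b * (f b \<bullet> u))"
      by (subst (1) u_eq) (simp add: linear_sum[OF lin] linear_scale[OF lin] inner_sum_left)
    also have "\<dots> = (\<Sum>b\<in>Basis. \<Sum>b'\<in>Basis. x b * x b' * w b b')"
      by (subst (1) u_eq) (simp add: inner_sum_right w_def sum_distrib_left mult.assoc)
    finally show ?thesis .
  qed
  \<comment> \<open>Polarization: positivity on b + b' and b - b' bounds the off-diagonal entries by the diagonal.\<close>
  have entry: "x b * x b' * (w b b' + w b' b) \<le> w b b + w b' b'" if "b \<in> Basis" "b' \<in> Basis" for b b'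
  proof -
    have "f (b + b') \<bullet> (b + b') \<ge> 0" "f (b - b') \<bullet> (b - b') \<ge> 0" by (rule psd)+
    hence ab: "\<bar>w b b' + w b' b\<bar> \<le> w b b + w b' b'"
      by (simp add: linear_add[OF lin] linear_diff[OF lin] inner_add_left inner_add_right
          inner_diff_left inner_diff_right w_def)
    have "\<bar>x b * x b'\<bar> \<le> 1" using xb[OF that(1)] xb[OF that(2)] by (simp add: abs_mult mult_le_one)
    hence "x b * x b' * (w b b' + w b' b) \<le> 1 * \<bar>w b b' + w b' b\<bar>"
      by (metis abs_ge_self abs_mult abs_ge_zero mult_right_mono order_trans)
    thus ?thesis using ab by simp
  qed
  have "2 * (f u \<bullet> u) = (\<Sum>b\<in>Basis. \<Sum>b'\<in>Basis. x b * x b' * (w b b' + w b' b))"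
    unfolding expand distrib_left sum.distrib
    by (subst (2) sum.swap) (simp add: mult.commute mult.left_commute)
  also have "\<dots> \<le> (\<Sum>b\<in>Basis. \<Sum>b'\<in>Basis. w b b + w b' b')"
    by (intro sum_mono entry)
  also have "\<dots> = 2 * (real DIM('d) * (\<Sum>b\<in>Basis. w b b))"
    by (simp add: sum.distrib sum_distrib_left[symmetric] algebra_simps)
  finally show ?thesis by (simp add: w_def)
qed

lemma strongly_convex_first_order:
  fixes W :: "'a::real_inner \<Rightarrow> real" and DW :: "'a \<Rightarrow> 'a" and D2W :: "'a \<Rightarrow> ('a \<Rightarrow>\<^sub>L 'a)"
  assumes grad: "\<And>y. (W has_derivative (\<lambda>h. DW y \<bullet> h)) (at y)"
    and hess: "\<And>y. (DW has_derivative blinfun_apply (D2W y)) (at y)"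
    and conv: "\<And>y h. c * (norm h)\<^sup>2 \<le> h \<bullet> blinfun_apply (D2W y) h"
  shows "W y + DW y \<bullet> (u - y) + c / 2 * (norm (u - y))\<^sup>2 \<le> W u"
proof -
  define h where "h = u - y"
  define p where "p t = W (y + t *\<^sub>R h)" for t
  define p' where "p' t = DW (y + t *\<^sub>R h) \<bullet> h" for t
  have lin: "((\<lambda>t. y + t *\<^sub>R h) has_derivative (\<lambda>s. s *\<^sub>R h)) (at t)" for t
    by (auto intro!: derivative_eq_intros)
  have dp: "(p has_real_derivative p' t) (at t)" for t
    unfolding has_field_derivative_def p_def p'_def
    by (rule has_derivative_eq_rhs[OF has_derivative_compose[OF lin grad]]) (simp add: fun_eq_iff mult.commute)
  have dp': "(p' has_real_derivative (blinfun_apply (D2W (y + t *\<^sub>R h)) h \<bullet> h)) (at t)" for t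
  proof -
    have "(p' has_derivative (\<lambda>s. blinfun_apply (D2W (y + t *\<^sub>R h)) (s *\<^sub>R h) \<bullet> h)) (at t)"
      unfolding p'_def using has_derivative_compose[OF lin hess] by (auto intro!: derivative_eq_intros)
    thus ?thesis unfolding has_field_derivative_def
      by (rule has_derivative_eq_rhs) (simp add: fun_eq_iff blinfun.scaleR_right mult.commute)
  qed
  have conv': "c * (norm h)\<^sup>2 \<le> blinfun_apply (D2W z) h \<bullet> h" for z
    using conv by (metis inner_commute)
  have p'_ge: "p' 0 + c * t * (norm h)\<^sup>2 \<le> p' t" if "t \<ge> 0" for t
  proof -
    have "p' 0 - c * 0 * (norm h)\<^sup>2 \<le> p' t - c * t * (norm h)\<^sup>2"
      by (rule DERIV_nonneg_imp_nondecreasing[OF that])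
        (use conv' in \<open>auto intro!: derivative_eq_intros dp'\<close>)
    thus ?thesis by simp
  qed
  have "p 0 - p' 0 * 0 - c / 2 * 0\<^sup>2 * (norm h)\<^sup>2 \<le> p 1 - p' 0 * 1 - c / 2 * 1\<^sup>2 * (norm h)\<^sup>2"
  proof (rule DERIV_nonneg_imp_nondecreasing[of 0 1], simp)
    fix t :: real assume t: "0 \<le> t"
    have "((\<lambda>t. p t - p' 0 * t - c / 2 * t\<^sup>2 * (norm h)\<^sup>2) has_real_derivative
          p' t - p' 0 - c * t * (norm h)\<^sup>2) (at t)"
      by (rule derivative_eq_intros dp refl | simp)+
    moreover have "p' t - p' 0 - c * t * (norm h)\<^sup>2 \<ge> 0" using p'_ge[OF t] by simp
    ultimately show "\<exists>y. ((\<lambda>t. p t - p' 0 * t - c / 2 * t\<^sup>2 * (norm h)\<^sup>2) has_real_derivative y) (at t) \<and> 0 \<le> y"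
      by blast
  qed
  thus ?thesis by (simp add: p_def p'_def h_def algebra_simps)
qed

lemma power2_norm_add_le:
  fixes a b :: "'a::real_normed_vector"
  assumes "\<epsilon> > 0"
  shows "(norm (a + b))\<^sup>2 \<le> (1 + \<epsilon>) * (norm a)\<^sup>2 + (1 + 1 / \<epsilon>) * (norm b)\<^sup>2"
proof -
  have "2 * (norm a * norm b) \<le> \<epsilon> * (norm a)\<^sup>2 + (norm b)\<^sup>2 / \<epsilon>"
  proof -
    have "0 \<le> (\<epsilon> * norm a - norm b)\<^sup>2 / \<epsilon>" using assms by simp
    also have "\<dots> = \<epsilon> * (norm a)\<^sup>2 + (norm b)\<^sup>2 / \<epsilon> - 2 * (norm a * norm b)"
      using assms by (simp add: power2_eq_square field_simps)
    finally show ?thesis by simp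
  qed
  moreover have "(norm (a + b))\<^sup>2 \<le> (norm a + norm b)\<^sup>2"
    using norm_triangle_ineq[of a b] by (simp add: power_mono)
  ultimately show ?thesis by (simp add: power2_sum algebra_simps add_divide_distrib)
qed

section \<open>Strongly convex potentials with a compactly supported perturbation\<close>

locale convex_plus_compact_potential =
  fixes V W chi :: "'d::euclidean_space \<Rightarrow> real" and DV DW Dchi :: "'d \<Rightarrow> 'd"
    and D2V D2W :: "'d \<Rightarrow> ('d \<Rightarrow>\<^sub>L 'd)" and c a :: real
  assumes V_nonneg: "\<forall>y. V y \<ge> 0"
    and V_grad: "\<forall>y. (V has_derivative (\<lambda>h. DV y \<bullet> h)) (at y)"
    and V_hess: "\<forall>y. (DV has_derivative blinfun_apply (D2V y)) (at y)"
    and V_decomp: "\<forall>y. V y = W y + chi y"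
    and W_grad: "\<forall>y. (W has_derivative (\<lambda>h. DW y \<bullet> h)) (at y)"
    and W_hess: "\<forall>y. (DW has_derivative blinfun_apply (D2W y)) (at y)"
    and c_pos: "c > 0"
    and W_convex: "\<forall>y h. c * (norm h)\<^sup>2 \<le> h \<bullet> blinfun_apply (D2W y) h"
    and chi_grad: "\<forall>y. (chi has_derivative (\<lambda>h. Dchi y \<bullet> h)) (at y)"
    and chi_supp: "compact (closure {y. chi y \<noteq> 0})"
    and chi_lip: "\<exists>L. \<forall>y z. norm (Dchi y - Dchi z) \<le> L * dist y z"
    and a_pos: "a > 0"
    and lap_bound: "\<forall>y. laplacian_of (D2V y) \<le> a * (1 + V y)"
begin

lemma Dchi_lipschitz:
  obtains L where "L \<ge> 0" "\<And>y z. norm (Dchi y - Dchi z) \<le> L * norm (y - z)"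
proof -
  obtain L where L: "\<forall>y z. norm (Dchi y - Dchi z) \<le> L * dist y z" using chi_lip by blast
  have "norm (Dchi y - Dchi z) \<le> max L 0 * norm (y - z)" for y z
    using L[rule_format, of y z] by (smt (verit) dist_norm max.cobounded1 mult_right_mono norm_ge_zero)
  thus thesis by (rule that[rotated]) simp
qed

lemma DV_eq: "DV y = DW y + Dchi y"
proof -
  have "((\<lambda>z. W z + chi z) has_derivative (\<lambda>h. (DW y + Dchi y) \<bullet> h)) (at y)"
    using W_grad chi_grad by (auto intro!: derivative_eq_intros simp: inner_add_left)
  moreover have "(\<lambda>z. W z + chi z) = V" using V_decomp by auto
  ultimately have "(\<lambda>h. DV y \<bullet> h) = (\<lambda>h. (DW y + Dchi y) \<bullet> h)"
    using has_derivative_unique V_grad by metis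
  thus ?thesis by (simp add: fun_eq_iff vector_eq_rdot)
qed

lemma chi_Dchi_eq_0_outside:
  assumes "y \<notin> closure {y. chi y \<noteq> 0}"
  shows "chi y = 0" "Dchi y = 0"
proof -
  let ?K = "closure {y. chi y \<noteq> 0}"
  have chi0: "chi z = 0" if "z \<notin> ?K" for z
    using that closure_subset[of "{y. chi y \<noteq> 0}"] by blast
  thus "chi y = 0" using assms .
  have "((\<lambda>z. 0) has_derivative (\<lambda>h. Dchi y \<bullet> h)) (at y)"
  proof (rule has_derivative_transform_within_open[OF chi_grad[rule_format] open_Compl[OF closed_closure]])
    show "y \<in> - ?K" using assms by simp
    show "chi z = 0" if "z \<in> - ?K" for z using chi0 that by blast
  qed
  hence "(\<lambda>h. Dchi y \<bullet> h) = (\<lambda>h. 0)" by (rule has_derivative_unique[OF _ has_derivative_const])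
  hence "Dchi y \<bullet> Dchi y = 0" by (rule fun_cong)
  thus "Dchi y = 0" by simp
qed

lemma chi_Dchi_bounded: "\<exists>S K. S \<ge> 0 \<and> K \<ge> 0 \<and> (\<forall>y. \<bar>chi y\<bar> \<le> S \<and> norm (Dchi y) \<le> K)"
proof -
  let ?K = "closure {y. chi y \<noteq> 0}"
  obtain L where L: "L \<ge> 0" "\<And>y z. norm (Dchi y - Dchi z) \<le> L * norm (y - z)"
    using Dchi_lipschitz by blast
  have "continuous_on UNIV chi"
    using chi_grad has_derivative_continuous by (metis continuous_at_imp_continuous_on)
  hence "compact (chi ` ?K)" by (rule compact_continuous_image[OF continuous_on_subset chi_supp]) simp
  then obtain S where S: "\<forall>z\<in>chi ` ?K. norm z \<le> S" using compact_imp_bounded bounded_iff by metis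
  obtain R where R: "\<forall>z\<in>?K. norm z \<le> R" using compact_imp_bounded[OF chi_supp] bounded_iff by metis
  define K where "K = norm (Dchi 0) + L * \<bar>R\<bar>"
  have "\<bar>chi y\<bar> \<le> \<bar>S\<bar> \<and> norm (Dchi y) \<le> K" for y
  proof (cases "y \<in> ?K")
    case True
    have "norm (Dchi y) \<le> norm (Dchi 0) + norm (Dchi y - Dchi 0)" by (metis norm_triangle_sub add.commute)
    also have "\<dots> \<le> norm (Dchi 0) + L * norm y" using L(2)[of y 0] by simp
    also have "\<dots> \<le> K" unfolding K_def using R True L(1) by (auto intro!: mult_left_mono)
    finally show ?thesis using S True by force
  next
    case False
    thus ?thesis using chi_Dchi_eq_0_outside[OF False] L(1) by (simp add: K_def)
  qed
  moreover have "K \<ge> 0" using L(1) by (simp add: K_def)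
  ultimately show ?thesis by (meson abs_ge_zero)
qed

lemma gradient_dissipative:
  "\<exists>S K. S \<ge> 0 \<and> K \<ge> 0 \<and>
     (\<forall>y u. (y - u) \<bullet> DV y \<ge> c / 2 * (norm (y - u))\<^sup>2 - K * norm (y - u) - V u - 2 * S)"
proof -
  obtain S K where SK: "S \<ge> 0" "K \<ge> 0" "\<And>y. \<bar>chi y\<bar> \<le> S" "\<And>y. norm (Dchi y) \<le> K"
    using chi_Dchi_bounded by blast
  have "(y - u) \<bullet> DV y \<ge> c / 2 * (norm (y - u))\<^sup>2 - K * norm (y - u) - V u - 2 * S" for y u
  proof -
    have W: "W y + DW y \<bullet> (u - y) + c / 2 * (norm (y - u))\<^sup>2 \<le> W u"
      using strongly_convex_first_order[of W DW D2W c y u] W_grad W_hess W_convex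
      by (simp add: norm_minus_commute)
    have "DW y \<bullet> (u - y) = - ((y - u) \<bullet> DW y)" by (simp add: inner_diff_right inner_commute)
    moreover have "- S \<le> W y" "W u \<le> V u + S"
      using V_decomp[rule_format, of y] V_decomp[rule_format, of u] V_nonneg[rule_format, of y]
        SK(3)[of y] SK(3)[of u] unfolding abs_le_iff by linarith+
    moreover have "- (K * norm (y - u)) \<le> (y - u) \<bullet> Dchi y"
    proof -
      have "\<bar>(y - u) \<bullet> Dchi y\<bar> \<le> norm (y - u) * norm (Dchi y)" by (rule Cauchy_Schwarz_ineq2)
      also have "\<dots> \<le> norm (y - u) * K" using SK(4) by (simp add: mult_left_mono)
      finally show ?thesis by (simp add: mult.commute)
    qed
    ultimately show ?thesis using W by (simp add: DV_eq inner_add_right)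
  qed
  thus ?thesis using SK by blast
qed

lemma hessian_form_bound:
  "\<exists>\<beta>. \<forall>y u. norm u = 1 \<longrightarrow> blinfun_apply (D2V y) u \<bullet> u \<le> (real DIM('d) * a) * V y + \<beta>"
proof -
  obtain L where L: "L \<ge> 0" "\<And>y z. norm (Dchi y - Dchi z) \<le> L * norm (y - z)"
    using Dchi_lipschitz by blast
  have "blinfun_apply (D2V y) u \<bullet> u \<le> (real DIM('d) * a) * V y + (real DIM('d) * a + real DIM('d) * real DIM('d) * L)"
    if u: "norm u = 1" for y u
  proof -
    let ?H = "\<lambda>h. blinfun_apply (D2V y) h - blinfun_apply (D2W y) h"
    have "(Dchi has_derivative ?H) (at y)"
    proof -
      have "((\<lambda>z. DV z - DW z) has_derivative ?H) (at y)"
        using V_hess W_hess by (intro has_derivative_diff) auto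
      moreover have "(\<lambda>z. DV z - DW z) = Dchi" by (auto simp: DV_eq)
      ultimately show ?thesis by simp
    qed
    hence H: "norm (?H h) \<le> L * norm h" for h
      by (rule has_derivative_norm_le_lipschitz) (rule L(2))
    \<comment> \<open>The Hessian of chi is bounded by L, so adding L Id makes the Hessian of V positive.\<close>
    define f where "f h = blinfun_apply (D2V y) h + L *\<^sub>R h" for h
    have lin: "linear f" unfolding f_def
      by (rule linearI) (simp_all add: blinfun.add_right blinfun.scaleR_right algebra_simps scaleR_add_right)
    have psd: "f h \<bullet> h \<ge> 0" for h
    proof -
      have "c * (norm h)\<^sup>2 \<le> blinfun_apply (D2W y) h \<bullet> h" using W_convex by (metis inner_commute)
      moreover have "c * (norm h)\<^sup>2 \<ge> 0" using c_pos by simp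
      moreover have "- (L * (norm h)\<^sup>2) \<le> ?H h \<bullet> h"
      proof -
        have "\<bar>?H h \<bullet> h\<bar> \<le> norm (?H h) * norm h" by (rule Cauchy_Schwarz_ineq2)
        also have "\<dots> \<le> L * norm h * norm h" using H[of h] by (simp add: mult_right_mono)
        finally show ?thesis by (simp add: power2_eq_square abs_le_iff mult.assoc)
      qed
      moreover have "f h \<bullet> h = blinfun_apply (D2W y) h \<bullet> h + ?H h \<bullet> h + L * (norm h)\<^sup>2"
        by (simp add: f_def inner_add_left inner_diff_left power2_norm_eq_inner)
      ultimately show ?thesis by linarith
    qed
    have tb: "f u \<bullet> u \<le> real DIM('d) * (\<Sum>b\<in>Basis. f b \<bullet> b)"
      by (rule psd_form_le_dim_trace[OF lin psd]) (simp add: u)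
    have tr: "(\<Sum>b\<in>Basis. f b \<bullet> b) = laplacian_of (D2V y) + L * real DIM('d)"
      by (simp add: f_def inner_add_left inner_add_right inner_commute sum.distrib laplacian_of_def)
    have fu: "f u \<bullet> u = blinfun_apply (D2V y) u \<bullet> u + L"
      using u by (simp add: f_def inner_add_left power2_norm_eq_inner[symmetric])
    have "real DIM('d) * laplacian_of (D2V y) \<le> real DIM('d) * (a * (1 + V y))"
      using lap_bound by (simp add: mult_left_mono)
    thus ?thesis using tb tr fu L(1) by (simp add: algebra_simps)
  qed
  thus ?thesis by (intro exI allI impI)
qed

lemma V_exp_growth: "\<exists>C k. C \<ge> 0 \<and> k \<ge> 0 \<and> (\<forall>y. V y \<le> C * exp (k * norm y))"
proof -
  define \<alpha> where "\<alpha> = real DIM('d) * a"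
  have \<alpha>: "\<alpha> > 0" using a_pos by (simp add: \<alpha>_def)
  obtain \<beta> where \<beta>: "\<forall>y u. norm u = 1 \<longrightarrow> blinfun_apply (D2V y) u \<bullet> u \<le> \<alpha> * V y + \<beta>"
    using hessian_form_bound unfolding \<alpha>_def by (elim exE)
  have "\<exists>C\<ge>0. \<forall>y. V y \<le> C * exp (sqrt \<alpha> * norm y)"
    using V_grad V_hess \<beta> \<alpha> by (intro exp_growth_of_hessian_bound) blast+
  then obtain C where "C \<ge> 0" "\<forall>y. V y \<le> C * exp (sqrt \<alpha> * norm y)" by blast
  thus ?thesis using \<alpha> by (intro exI[of _ C] exI[of _ "sqrt \<alpha>"]) simp
qed

end

section \<open>Energy estimate along the drift\<close>

lemma integrating_factor_bound:
  fixes \<phi> \<phi>' f g G :: "real \<Rightarrow> real"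
  assumes "\<tau> \<le> T"
    and \<phi>_cont: "continuous_on {\<tau>..T} \<phi>"
    and \<phi>_der: "\<And>s. s \<in> {\<tau><..<T} \<Longrightarrow> (\<phi> has_real_derivative \<phi>' s) (at s)"
    and \<phi>'_le: "\<And>s. s \<in> {\<tau><..<T} \<Longrightarrow> \<phi>' s \<le> - \<kappa> * g s * \<phi> s + f s"
    and G_cont: "continuous_on {\<tau>..T} G"
    and G_der: "\<And>s. s \<in> {\<tau><..<T} \<Longrightarrow> (G has_real_derivative g s) (at s)"
    and f_cont: "continuous_on {\<tau>..T} f"
  shows "\<phi> T \<le> exp (- \<kappa> * (G T - G \<tau>)) * \<phi> \<tau> + integral {\<tau>..T} (\<lambda>s. exp (- \<kappa> * (G T - G s)) * f s)"
proof -
  define E where "E s = exp (\<kappa> * G s)" for s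
  define I where "I s = integral {\<tau>..s} (\<lambda>s. E s * f s)" for s
  have Ef_cont: "continuous_on {\<tau>..T} (\<lambda>s. E s * f s)"
    unfolding E_def using G_cont f_cont by (intro continuous_intros)
  have "(\<lambda>s. E s * \<phi> s - I s) T \<le> (\<lambda>s. E s * \<phi> s - I s) \<tau>"
  proof (rule DERIV_nonpos_imp_decreasing_open[OF \<open>\<tau> \<le> T\<close>])
    fix s assume "\<tau> < s" "s < T"
    hence s: "s \<in> {\<tau><..<T}" by simp
    have dE: "(E has_real_derivative E s * (\<kappa> * g s)) (at s)"
      unfolding E_def using G_der[OF s] by (auto intro!: derivative_eq_intros)
    have "(I has_real_derivative E s * f s) (at s within {\<tau>..T})"
      unfolding I_def by (rule integral_has_real_derivative[OF Ef_cont]) (use s in auto)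
    moreover have "at s within {\<tau>..T} = at s" using s by (intro at_within_Icc_at) auto
    ultimately have dI: "(I has_real_derivative E s * f s) (at s)" by simp
    have "E s * (\<kappa> * g s) * \<phi> s + \<phi>' s * E s - E s * f s = E s * (\<phi>' s - (- \<kappa> * g s * \<phi> s + f s))"
      by (simp add: algebra_simps)
    also have "\<dots> \<le> 0" using \<phi>'_le[OF s] by (intro mult_nonneg_nonpos) (auto simp: E_def)
    finally show "\<exists>y. ((\<lambda>s. E s * \<phi> s - I s) has_real_derivative y) (at s) \<and> y \<le> 0"
      using DERIV_diff[OF DERIV_mult[OF dE \<phi>_der[OF s]] dI] by blast
  next
    have "continuous_on {\<tau>..T} I"
      unfolding I_def by (rule indefinite_integral_continuous_1[OF integrable_continuous_real[OF Ef_cont]])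
    thus "continuous_on {\<tau>..T} (\<lambda>s. E s * \<phi> s - I s)"
      unfolding E_def using G_cont \<phi>_cont by (intro continuous_intros)
  qed
  hence "\<phi> T \<le> (E \<tau> / E T) * \<phi> \<tau> + integral {\<tau>..T} (\<lambda>s. (E s / E T) * f s)"
    by (simp add: I_def E_def field_simps)
  moreover have "E s / E T = exp (- \<kappa> * (G T - G s))" for s
    by (simp add: E_def exp_diff[symmetric] algebra_simps)
  ultimately show ?thesis by simp
qed

definition energy_source :: "real \<Rightarrow> real \<Rightarrow> real \<Rightarrow> real \<Rightarrow> real \<Rightarrow> ('d::real_normed_vector \<Rightarrow> real) \<Rightarrow> 'd \<Rightarrow> real"
  where "energy_source c K S r g0 V u = 2 * V u + 4 * S + 2 * (K + norm u / (r * g0))\<^sup>2 / c"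

lemma energy_source_nonneg:
  assumes "\<forall>y. V y \<ge> 0" "S \<ge> 0" "c > 0"
  shows "energy_source c K S r g0 V u \<ge> 0"
  unfolding energy_source_def using assms by (intro add_nonneg_nonneg) auto

lemma continuous_on_energy_source:
  assumes "continuous_on UNIV V"
  shows "continuous_on UNIV (energy_source c K S r g0 V)"
  unfolding energy_source_def divide_inverse using assms by (intro continuous_intros)

text \<open>The confinement term -y/(r+s) only produces a cross term, which is absorbed into the
  source because g s \<ge> g0 > 0.\<close>

lemma drift_energy_ineq:
  fixes z u :: "'d::real_inner" and DV :: "'d \<Rightarrow> 'd"
  assumes key: "\<forall>y u. (y - u) \<bullet> DV y \<ge> c / 2 * (norm (y - u))\<^sup>2 - K * norm (y - u) - V u - 2 * S"
    and c: "c > 0" and K: "K \<ge> 0" and r: "r > 0" and g0: "g0 > 0" and gg: "gs \<ge> g0" and s: "s \<ge> 0"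
  shows "2 * (z \<bullet> (- (gs *\<^sub>R DV (z + u) + (1 / (r + s)) *\<^sub>R (z + u))))
     \<le> - (c / 2) * gs * (norm z)\<^sup>2 + gs * energy_source c K S r g0 V u"
proof -
  define n where "n = norm z"
  define m where "m = norm u"
  define A where "A = K + m / (r * g0)"
  have n: "n \<ge> 0" "m \<ge> 0" by (auto simp: n_def m_def)
  have gpos: "gs > 0" using gg g0 by linarith
  have k: "z \<bullet> DV (z + u) \<ge> c / 2 * n\<^sup>2 - K * n - V u - 2 * S"
    using key[rule_format, of "z + u" u] by (simp add: n_def)
  have cross: "- (z \<bullet> (z + u)) / (r + s) \<le> gs * (n * (m / (r * g0)))"
  proof -
    have "- (z \<bullet> u) \<le> n * m" using Cauchy_Schwarz_ineq2[of z u] by (simp add: n_def m_def abs_le_iff)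
    moreover have "- (z \<bullet> (z + u)) = - (z \<bullet> z) - z \<bullet> u" by (simp add: inner_add_right)
    ultimately have "- (z \<bullet> (z + u)) \<le> n * m" using inner_ge_zero[of z] by linarith
    hence "- (z \<bullet> (z + u)) / (r + s) \<le> n * m / r"
      using r s n by (smt (verit) divide_right_mono frac_le mult_nonneg_nonneg)
    also have "n * m / r = g0 * (n * (m / (r * g0)))" using g0 r by (simp add: field_simps)
    also have "\<dots> \<le> gs * (n * (m / (r * g0)))" using gg n r g0 by (intro mult_right_mono) auto
    finally show ?thesis .
  qed
  have young: "2 * n * A \<le> c / 2 * n\<^sup>2 + 2 * A\<^sup>2 / c"
  proof -
    have "0 \<le> c / 2 * (n - 2 * A / c)\<^sup>2" using c by simp
    also have "c / 2 * (n - 2 * A / c)\<^sup>2 = c / 2 * n\<^sup>2 - 2 * n * A + 2 * A\<^sup>2 / c"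
      using c by (simp add: power2_eq_square field_simps)
    finally show ?thesis by linarith
  qed
  have "2 * (z \<bullet> (- (gs *\<^sub>R DV (z + u) + (1 / (r + s)) *\<^sub>R (z + u))))
      = - 2 * gs * (z \<bullet> DV (z + u)) + 2 * (- (z \<bullet> (z + u)) / (r + s))"
    by (simp add: inner_add_right inner_minus_right algebra_simps add_divide_distrib diff_divide_distrib)
  also have "\<dots> \<le> - 2 * gs * (c / 2 * n\<^sup>2 - K * n - V u - 2 * S) + 2 * (gs * (n * (m / (r * g0))))"
    using k gpos cross by (intro add_mono) (simp_all add: mult_le_cancel_left)
  also have "\<dots> = - gs * c * n\<^sup>2 + gs * (2 * n * A) + gs * (2 * V u + 4 * S)"
    by (simp add: A_def algebra_simps)
  also have "\<dots> \<le> - gs * c * n\<^sup>2 + gs * (c / 2 * n\<^sup>2 + 2 * A\<^sup>2 / c) + gs * (2 * V u + 4 * S)"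
    using young gpos by (simp add: mult_left_mono)
  also have "\<dots> = - (c / 2) * gs * (norm z)\<^sup>2 + gs * energy_source c K S r g0 V u"
    by (simp add: energy_source_def A_def m_def n_def algebra_simps)
  finally show ?thesis .
qed

lemma drift_energy_bound:
  fixes Z U :: "real \<Rightarrow> 'd::real_inner" and DV :: "'d \<Rightarrow> 'd" and g G :: "real \<Rightarrow> real"
  assumes key: "\<forall>y u. (y - u) \<bullet> DV y \<ge> c / 2 * (norm (y - u))\<^sup>2 - K * norm (y - u) - V u - 2 * S"
    and c: "c > 0" and K: "K \<ge> 0" and r: "r > 0" and g0: "g0 > 0"
    and tau: "0 \<le> \<tau>" "\<tau> \<le> T"
    and g_ge: "\<forall>s\<in>{\<tau>..T}. g s \<ge> g0"
    and g_cont: "continuous_on {\<tau>..T} g"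
    and G_der: "\<forall>s\<in>{\<tau><..<T}. (G has_real_derivative g s) (at s)"
    and G_cont: "continuous_on {\<tau>..T} G"
    and V_cont: "continuous_on UNIV V"
    and U_cont: "continuous_on {\<tau>..T} U"
    and Z_cont: "continuous_on {\<tau>..T} Z"
    and Z_der: "\<forall>s\<in>{\<tau><..<T}. (Z has_vector_derivative
          - (g s *\<^sub>R DV (Z s + U s) + (1 / (r + s)) *\<^sub>R (Z s + U s))) (at s)"
  shows "(norm (Z T))\<^sup>2 \<le> exp (- (c / 2) * (G T - G \<tau>)) * (norm (Z \<tau>))\<^sup>2
      + integral {\<tau>..T} (\<lambda>s. exp (- (c / 2) * (G T - G s)) * (g s * energy_source c K S r g0 V (U s)))"
proof (rule integrating_factor_bound[OF tau(2)])
  let ?Zd = "\<lambda>s. - (g s *\<^sub>R DV (Z s + U s) + (1 / (r + s)) *\<^sub>R (Z s + U s))"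
  show "continuous_on {\<tau>..T} (\<lambda>s. (norm (Z s))\<^sup>2)" using Z_cont by (intro continuous_intros)
  show "((\<lambda>s. (norm (Z s))\<^sup>2) has_real_derivative 2 * (Z s \<bullet> ?Zd s)) (at s)" if "s \<in> {\<tau><..<T}" for s
  proof -
    have Zd: "(Z has_derivative (\<lambda>h. h *\<^sub>R ?Zd s)) (at s)"
      using Z_der that unfolding has_vector_derivative_def by blast
    have "((\<lambda>s. Z s \<bullet> Z s) has_derivative (\<lambda>h. Z s \<bullet> (h *\<^sub>R ?Zd s) + (h *\<^sub>R ?Zd s) \<bullet> Z s)) (at s)"
      by (rule has_derivative_inner[OF Zd Zd])
    thus ?thesis unfolding has_field_derivative_def power2_norm_eq_inner
      by (rule has_derivative_eq_rhs) (auto simp: fun_eq_iff inner_commute algebra_simps)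
  qed
  show "2 * (Z s \<bullet> ?Zd s) \<le> - (c / 2) * g s * (norm (Z s))\<^sup>2 + g s * energy_source c K S r g0 V (U s)"
    if "s \<in> {\<tau><..<T}" for s
    by (rule drift_energy_ineq[OF key c K r g0]) (use that g_ge tau in auto)
  show "continuous_on {\<tau>..T} (\<lambda>s. g s * energy_source c K S r g0 V (U s))"
    using g_cont continuous_on_compose2[OF continuous_on_energy_source[OF V_cont] U_cont]
    by (intro continuous_intros) auto
qed (use G_cont G_der in auto)

lemma gaussian_density_tilt:
  fixes n v p :: real
  assumes v: "0 < v" "v < 2"
  defines "v' \<equiv> 2 * v / (2 - v)"
  shows "(2 * pi * v) powr (- p) * exp (- n\<^sup>2 / (2 * v)) * exp (n\<^sup>2 / 4)
       = (v' / v) powr p * ((2 * pi * v') powr (- p) * exp (- n\<^sup>2 / (2 * v')))"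
proof -
  have v'pos: "v' > 0" using v by (simp add: v'_def)
  have e: "- n\<^sup>2 / (2 * v) + n\<^sup>2 / 4 = - n\<^sup>2 / (2 * v')"
    using v by (simp add: v'_def field_simps)
  have "(v' / v) powr p * (2 * pi * v') powr (- p) = (v' powr p / v powr p) * ((2 * pi) powr (- p) * v' powr (- p))"
    using v v'pos by (simp add: powr_divide powr_mult)
  also have "\<dots> = (2 * pi * v) powr (- p)"
    using v v'pos by (simp add: powr_minus powr_mult field_simps)
  finally show ?thesis using e by (simp add: exp_add[symmetric] mult.assoc)
qed

lemma gaussian_iso_exp_moment:
  fixes v :: real
  assumes v: "0 < v" "v \<le> 1"
    and P: "prob_space (gaussian_iso (2 * v / (2 - v)) :: 'd::euclidean_space measure)"
  shows "(\<integral>\<^sup>+y. ennreal (exp ((norm y)\<^sup>2 / 4)) \<partial>(gaussian_iso v :: 'd measure)) \<le> ennreal (2 powr (real DIM('d) / 2))"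
proof -
  define v' where "v' = 2 * v / (2 - v)"
  define q where "q = (v' / v) powr (real DIM('d) / 2)"
  define gd where "gd w y = (2 * pi * w) powr (- real DIM('d) / 2) * exp (- (norm y)\<^sup>2 / (2 * w))" for w and y :: 'd
  have gi: "gaussian_iso w = density lborel (\<lambda>y. ennreal (gd w y))" for w
    by (simp add: gaussian_iso_def gd_def)
  have meas: "(\<lambda>y. ennreal (gd w y)) \<in> borel_measurable lborel" for w
    unfolding gd_def by measurable
  have "(\<integral>\<^sup>+y. ennreal (exp ((norm y)\<^sup>2 / 4)) \<partial>(gaussian_iso v :: 'd measure))
      = (\<integral>\<^sup>+y. ennreal (gd v y) * ennreal (exp ((norm y)\<^sup>2 / 4)) \<partial>lborel)"
    unfolding gi by (rule nn_integral_density[OF meas]) measurable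
  also have "\<dots> = (\<integral>\<^sup>+y. ennreal q * ennreal (gd v' y) \<partial>lborel)"
  proof (rule nn_integral_cong)
    fix y :: 'd
    have "- real DIM('d) / 2 = - (real DIM('d) / 2)" by simp
    hence "gd v y * exp ((norm y)\<^sup>2 / 4) = q * gd v' y"
      unfolding gd_def q_def v'_def by (simp only:) (rule gaussian_density_tilt, use v in auto)
    thus "ennreal (gd v y) * ennreal (exp ((norm y)\<^sup>2 / 4)) = ennreal q * ennreal (gd v' y)"
      by (simp add: ennreal_mult[symmetric] gd_def q_def)
  qed
  also have "\<dots> = ennreal q * (\<integral>\<^sup>+y. ennreal (gd v' y) \<partial>lborel)"
    by (rule nn_integral_cmult) (rule meas)
  also have "(\<integral>\<^sup>+y. ennreal (gd v' y) \<partial>lborel) = 1"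
  proof -
    interpret prob_space "gaussian_iso v' :: 'd measure" using P by (simp add: v'_def)
    have "emeasure (gaussian_iso v' :: 'd measure) UNIV = (\<integral>\<^sup>+y. ennreal (gd v' y) * indicator UNIV y \<partial>lborel)"
      unfolding gi by (rule emeasure_density[OF meas]) simp
    thus ?thesis using emeasure_space_1 by (simp add: gi)
  qed
  also have "ennreal q * 1 \<le> ennreal (2 powr (real DIM('d) / 2))"
  proof -
    have "v' / v \<le> 2" using v by (simp add: v'_def field_simps)
    hence "q \<le> 2 powr (real DIM('d) / 2)" unfolding q_def using v by (intro powr_mono2) (auto simp: v'_def)
    thus ?thesis by (simp add: ennreal_leI)
  qed
  finally show ?thesis .
qed

lemma borel_measurable_continuous_process:
  fixes X :: "real \<Rightarrow> 'a \<Rightarrow> 'b::euclidean_space"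
  assumes meas: "\<And>t. X t \<in> borel_measurable M" and cont: "\<And>\<omega>. continuous_on UNIV (\<lambda>t. X t \<omega>)"
  shows "(\<lambda>p. X (snd p) (fst p)) \<in> borel_measurable (M \<Otimes>\<^sub>M lborel)"
proof (rule borel_measurable_LIMSEQ_metric)
  \<comment> \<open>Approximate by the processes sampled on the grids of mesh 1 / (n + 1).\<close>
  fix n :: nat
  show "(\<lambda>p. X (real_of_int \<lfloor>real (Suc n) * snd p\<rfloor> / real (Suc n)) (fst p)) \<in> borel_measurable (M \<Otimes>\<^sub>M lborel)"
  proof (rule measurable_compose_countable[where f = "\<lambda>i p. X (real_of_int i / real (Suc n)) (fst p)"])
    show "\<And>i. (\<lambda>p. X (real_of_int i / real (Suc n)) (fst p)) \<in> borel_measurable (M \<Otimes>\<^sub>M lborel)"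
      by (rule measurable_compose[OF measurable_fst meas])
    show "(\<lambda>p. \<lfloor>real (Suc n) * snd p\<rfloor>) \<in> measurable (M \<Otimes>\<^sub>M lborel) (count_space UNIV)"
      by (rule measurable_compose[OF _ measurable_real_floor]) measurable
  qed
next
  fix p :: "'a \<times> real"
  define s where "s = snd p"
  define t where "t n = real_of_int \<lfloor>real (Suc n) * s\<rfloor> / real (Suc n)" for n :: nat
  have t_bounds: "s - inverse (real (Suc n)) \<le> t n \<and> t n \<le> s" for n
  proof -
    define N where "N = real (Suc n)"
    define F where "F = real_of_int \<lfloor>N * s\<rfloor>"
    have N: "N > 0" and F: "F \<le> N * s" "N * s - 1 \<le> F" by (simp_all add: N_def F_def)
    have "F / N \<le> s" using F N by (simp add: divide_le_eq mult.commute)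
    moreover have "s - inverse N = (N * s - 1) / N" using N by (simp add: field_simps)
    moreover have "(N * s - 1) / N \<le> F / N" using F N by (simp add: divide_right_mono)
    ultimately show ?thesis by (simp add: t_def N_def F_def)
  qed
  have "t \<longlonglongrightarrow> s"
  proof (rule tendsto_sandwich[of "\<lambda>n. s - inverse (real (Suc n))" _ _ "\<lambda>n. s"])
    show "(\<lambda>n. s - inverse (real (Suc n))) \<longlonglongrightarrow> s"
      using tendsto_diff[OF tendsto_const LIMSEQ_inverse_real_of_nat, of s] by simp
  qed (use t_bounds in auto)
  moreover have "isCont (\<lambda>t. X t (fst p)) s" using cont[of "fst p"] by (simp add: continuous_on_eq_continuous_at)
  ultimately show "(\<lambda>n. X (real_of_int \<lfloor>real (Suc n) * snd p\<rfloor> / real (Suc n)) (fst p)) \<longlonglongrightarrow> X (snd p) (fst p)"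
    unfolding t_def s_def by (rule isCont_tendsto_compose[rotated])
qed

lemma SUP_bounded_of_unit_step_contraction:
  fixes E :: "real \<Rightarrow> ennreal"
  assumes init: "\<And>t. 0 \<le> t \<Longrightarrow> t \<le> 1 \<Longrightarrow> E t \<le> ennreal D0"
    and step: "\<And>t. 1 < t \<Longrightarrow> E t \<le> ennreal q * E (t - 1) + ennreal C"
    and q: "0 \<le> q" "q < 1" and C: "C \<ge> 0"
  shows "(SUP t\<in>{0..}. E t) < \<infinity>"
proof -
  define D where "D = max D0 (C / (1 - q))"
  have D0: "D0 \<le> D" by (simp add: D_def)
  have DC: "q * D + C \<le> D"
  proof -
    have "C / (1 - q) \<le> D" by (simp add: D_def)
    hence "C \<le> (1 - q) * D" using q by (simp add: divide_le_eq mult.commute)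
    thus ?thesis by (simp add: algebra_simps)
  qed
  have D_nonneg: "D \<ge> 0" using q C by (simp add: D_def le_max_iff_disj)
  have init_D: "E t \<le> ennreal D" if "0 \<le> t" "t \<le> 1" for t
    using init[OF that] ennreal_leI[OF D0] by (rule order_trans)
  have bound: "\<forall>t\<in>{0..real n}. E t \<le> ennreal D" for n :: nat
  proof (induction n)
    case 0
    thus ?case using init_D by simp
  next
    case (Suc n)
    show ?case
    proof
      fix t assume t: "t \<in> {0..real (Suc n)}"
      show "E t \<le> ennreal D"
      proof (cases "t \<le> 1")
        case True
        thus ?thesis using init_D t by simp
      next
        case False
        have "E t \<le> ennreal q * E (t - 1) + ennreal C" using False by (intro step) simp
        also have "\<dots> \<le> ennreal q * ennreal D + ennreal C"
          using Suc.IH t False by (intro add_mono mult_left_mono) auto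
        also have "\<dots> = ennreal (q * D + C)" using q C D_nonneg by (simp add: ennreal_mult ennreal_plus)
        also have "\<dots> \<le> ennreal D" using DC by (rule ennreal_leI)
        finally show ?thesis .
      qed
    qed
  qed
  have "(SUP t\<in>{0..}. E t) \<le> ennreal D"
  proof (rule SUP_least)
    fix t :: real assume "t \<in> {0..}"
    hence "t \<in> {0..real (nat \<lceil>t\<rceil>)}" by (auto simp: real_nat_ceiling_ge)
    thus "E t \<le> ennreal D" using bound by blast
  qed
  also have "\<dots> < \<infinity>" by simp
  finally show ?thesis .
qed

section \<open>The equation with additive noise\<close>

locale additive_noise_sde =
  fixes M :: "'a measure" and B :: "real \<Rightarrow> 'a \<Rightarrow> 'd::euclidean_space" and Y :: "real \<Rightarrow> 'a \<Rightarrow> 'd"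
    and V :: "'d \<Rightarrow> real" and DV :: "'d \<Rightarrow> 'd" and g :: "real \<Rightarrow> real"
    and r c K S CV kV :: real and y0 :: 'd
  assumes BM: "std_brownian_motion M B"
    and dissipative: "\<forall>y u. (y - u) \<bullet> DV y \<ge> c / 2 * (norm (y - u))\<^sup>2 - K * norm (y - u) - V u - 2 * S"
    and c_pos: "c > 0" and K_nonneg: "K \<ge> 0" and S_nonneg: "S \<ge> 0"
    and V_nonneg: "\<forall>y. V y \<ge> 0"
    and V_cont: "continuous_on UNIV V" and DV_cont: "continuous_on UNIV DV"
    and V_growth: "\<forall>y. V y \<le> CV * exp (kV * norm y)" and CV_nonneg: "CV \<ge> 0"
    and g_cont: "continuous_on {0..} g" and g_pos: "\<forall>t\<ge>0. g t > 0" and g_mono: "mono_on {0..} g"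
    and r_pos: "r > 0"
    and Y_meas: "\<forall>t\<ge>0. Y t \<in> borel_measurable M"
    and Y_sol: "AE \<omega> in M. continuous_on {0..} (\<lambda>t. Y t \<omega>) \<and>
        (\<forall>t\<ge>0. Y t \<omega> = y0 + B t \<omega>
            - integral {0..t} (\<lambda>s. g s *\<^sub>R DV (Y s \<omega>) + (1 / (r + s)) *\<^sub>R Y s \<omega>))"
begin

sublocale prob_space M using BM by (simp add: std_brownian_motion_def)

lemma B_measurable: "t \<ge> 0 \<Longrightarrow> B t \<in> borel_measurable M"
  using BM by (simp add: std_brownian_motion_def)

lemma distr_B_increment: "0 \<le> s \<Longrightarrow> s < t \<Longrightarrow> distr M borel (\<lambda>\<omega>. B t \<omega> - B s \<omega>) = gaussian_iso (t - s)"
  using BM by (simp add: std_brownian_motion_def)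

lemma prob_space_gaussian_iso: "w > 0 \<Longrightarrow> prob_space (gaussian_iso w :: 'd measure)"
  using prob_space_distr[of "\<lambda>\<omega>. B w \<omega> - B 0 \<omega>" borel] B_measurable[of w] B_measurable[of 0]
    distr_B_increment[of 0 w] by simp

abbreviation src :: "'d \<Rightarrow> real" where "src \<equiv> energy_source c K S r (g 0) V"

lemma g_ge_g0: "t \<ge> 0 \<Longrightarrow> g 0 \<le> g t"
  using g_mono by (auto simp: mono_on_def)

lemma g0_pos: "g 0 > 0" using g_pos by simp

lemma src_nonneg: "src u \<ge> 0"
  using energy_source_nonneg V_nonneg S_nonneg c_pos by blast

lemma borel_measurable_src: "src \<in> borel_measurable borel"
  by (rule borel_measurable_continuous_onI[OF continuous_on_energy_source[OF V_cont]])

lemma src_gaussian_growth: "\<exists>A\<ge>0. \<forall>u. src u \<le> A * exp ((norm u)\<^sup>2 / 4)"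
proof -
  define A where "A = 2 * CV * exp (kV\<^sup>2) + 4 * S + 4 * K\<^sup>2 / c + 16 / (c * (r * g 0)\<^sup>2)"
  have "src u \<le> A * exp ((norm u)\<^sup>2 / 4)" for u
  proof -
    define n where "n = norm u"
    define E where "E = exp (n\<^sup>2 / 4)"
    have E1: "E \<ge> 1" by (simp add: E_def)
    have "1 + n\<^sup>2 / 4 \<le> E" unfolding E_def by (rule exp_ge_add_one_self)
    hence nE: "n\<^sup>2 \<le> 4 * E" by linarith
    \<comment> \<open>kV n \<le> kV^2 + n^2/4 turns the exponential growth of V into Gaussian growth.\<close>
    have "kV * n \<le> kV\<^sup>2 + n\<^sup>2 / 4"
      using zero_le_power2[of "n / 2 - kV"] by (simp add: power2_eq_square algebra_simps)
    hence "CV * exp (kV * n) \<le> CV * (exp (kV\<^sup>2) * E)"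
      using CV_nonneg by (intro mult_left_mono) (simp_all add: E_def exp_add[symmetric])
    hence Vb: "V u \<le> CV * exp (kV\<^sup>2) * E" using V_growth n_def by (metis mult.assoc order_trans)
    have rg: "r * g 0 > 0" using r_pos g0_pos by simp
    have "(K + m)\<^sup>2 \<le> 2 * K\<^sup>2 + 2 * m\<^sup>2" for m
      using zero_le_power2[of "K - m"] by (simp add: power2_eq_square algebra_simps)
    from this[of "n / (r * g 0)"]
    have sq: "(K + n / (r * g 0))\<^sup>2 \<le> 2 * K\<^sup>2 + 2 * n\<^sup>2 / (r * g 0)\<^sup>2"
      by (simp add: power_divide)
    have "src u = 2 * V u + 4 * S + 2 * (K + n / (r * g 0))\<^sup>2 / c"
      by (simp add: energy_source_def n_def)
    also have "\<dots> \<le> 2 * (CV * exp (kV\<^sup>2) * E) + 4 * S + 2 * (2 * K\<^sup>2 + 2 * n\<^sup>2 / (r * g 0)\<^sup>2) / c"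
      using Vb sq c_pos by (intro add_mono divide_right_mono mult_left_mono) auto
    also have "\<dots> = 2 * CV * exp (kV\<^sup>2) * E + 4 * S + 4 * K\<^sup>2 / c + 4 / (c * (r * g 0)\<^sup>2) * n\<^sup>2"
      using c_pos rg by (simp add: field_simps)
    also have "\<dots> \<le> 2 * CV * exp (kV\<^sup>2) * E + 4 * S * E + 4 * K\<^sup>2 / c * E + 4 / (c * (r * g 0)\<^sup>2) * (4 * E)"
    proof -
      have "4 * S \<le> 4 * S * E" using S_nonneg E1 by (simp add: mult_le_cancel_left1)
      moreover have "4 * K\<^sup>2 / c * 1 \<le> 4 * K\<^sup>2 / c * E" using c_pos E1 by (intro mult_left_mono) auto
      moreover have "4 / (c * (r * g 0)\<^sup>2) * n\<^sup>2 \<le> 4 / (c * (r * g 0)\<^sup>2) * (4 * E)"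
        using nE c_pos rg by (intro mult_left_mono) auto
      ultimately show ?thesis by linarith
    qed
    also have "\<dots> = A * exp ((norm u)\<^sup>2 / 4)" by (simp add: A_def E_def n_def algebra_simps)
    finally show ?thesis .
  qed
  moreover have "A \<ge> 0"
    unfolding A_def using CV_nonneg S_nonneg c_pos by (intro add_nonneg_nonneg) auto
  ultimately show ?thesis by blast
qed

lemma increment_moment_bound:
  fixes f :: "'d \<Rightarrow> real"
  assumes tau: "0 \<le> \<tau>" "\<tau> \<le> s" "s \<le> \<tau> + 1"
    and fm: "f \<in> borel_measurable borel" and fb: "\<And>u. f u \<le> A * exp ((norm u)\<^sup>2 / 4)" and A: "A \<ge> 0"
  shows "(\<integral>\<^sup>+\<omega>. ennreal (f (B s \<omega> - B \<tau> \<omega>)) \<partial>M) \<le> ennreal (A * 2 powr (real DIM('d) / 2))"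
proof (cases "s = \<tau>")
  case True
  have "f 0 \<le> A * 1" using fb[of 0] by simp
  also have "\<dots> \<le> A * 2 powr (real DIM('d) / 2)" using A by (intro mult_left_mono) (simp_all add: ge_one_powr_ge_zero)
  finally show ?thesis using True by (simp add: emeasure_space_1 ennreal_leI)
next
  case False
  define v where "v = s - \<tau>"
  have v: "0 < v" "v \<le> 1" using False tau by (auto simp: v_def)
  have [measurable]: "B s \<in> borel_measurable M" "B \<tau> \<in> borel_measurable M" using B_measurable tau by auto
  have "(\<integral>\<^sup>+\<omega>. ennreal (f (B s \<omega> - B \<tau> \<omega>)) \<partial>M)
      = (\<integral>\<^sup>+y. ennreal (f y) \<partial>distr M borel (\<lambda>\<omega>. B s \<omega> - B \<tau> \<omega>))"
    by (rule nn_integral_distr[symmetric]) (use fm in simp_all)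
  also have "\<dots> = (\<integral>\<^sup>+y. ennreal (f y) \<partial>(gaussian_iso v :: 'd measure))"
    using distr_B_increment[of \<tau> s] False tau by (simp add: v_def)
  also have "\<dots> \<le> (\<integral>\<^sup>+y. ennreal A * ennreal (exp ((norm y)\<^sup>2 / 4)) \<partial>(gaussian_iso v :: 'd measure))"
    by (rule nn_integral_mono) (use fb A in \<open>simp add: ennreal_mult[symmetric]\<close>)
  also have "\<dots> = ennreal A * (\<integral>\<^sup>+y. ennreal (exp ((norm y)\<^sup>2 / 4)) \<partial>(gaussian_iso v :: 'd measure))"
    by (rule nn_integral_cmult) (simp add: gaussian_iso_def)
  also have "\<dots> \<le> ennreal A * ennreal (2 powr (real DIM('d) / 2))"
    using v by (intro mult_left_mono gaussian_iso_exp_moment prob_space_gaussian_iso) auto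
  also have "\<dots> = ennreal (A * 2 powr (real DIM('d) / 2))" using A by (simp add: ennreal_mult)
  finally show ?thesis .
qed

definition G :: "real \<Rightarrow> real" where "G t = integral {0..t} g"

lemma G_has_derivative_within: "0 \<le> t \<Longrightarrow> t \<le> b \<Longrightarrow> (G has_real_derivative g t) (at t within {0..b})"
  unfolding G_def by (rule integral_has_real_derivative[OF continuous_on_subset[OF g_cont]]) auto

lemma G_has_derivative: "0 < t \<Longrightarrow> (G has_real_derivative g t) (at t)"
  using G_has_derivative_within[of t "t + 1"] at_within_Icc_at[of 0 t "t + 1"] by simp

lemma continuous_on_G: "continuous_on {0..b} G"
  unfolding G_def
  by (rule indefinite_integral_continuous_1[OF integrable_continuous_real[OF continuous_on_subset[OF g_cont]]]) auto

lemma G_increment_ge: "0 \<le> \<tau> \<Longrightarrow> \<tau> \<le> T \<Longrightarrow> g 0 * (T - \<tau>) \<le> G T - G \<tau>"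
proof -
  assume tau: "0 \<le> \<tau>" "\<tau> \<le> T"
  have "(\<lambda>t. g 0 * t - G t) T \<le> (\<lambda>t. g 0 * t - G t) \<tau>"
  proof (rule DERIV_nonpos_imp_decreasing_open[OF tau(2)])
    fix x assume x: "\<tau> < x" "x < T"
    have "((\<lambda>t. g 0 * t - G t) has_real_derivative g 0 * 1 - g x) (at x)"
      using G_has_derivative[of x] x tau by (intro derivative_intros) auto
    moreover have "g 0 * 1 - g x \<le> 0" using g_ge_g0[of x] x tau by simp
    ultimately show "\<exists>y. ((\<lambda>t. g 0 * t - G t) has_real_derivative y) (at x) \<and> y \<le> 0" by blast
  next
    show "continuous_on {\<tau>..T} (\<lambda>t. g 0 * t - G t)"
      using continuous_on_subset[OF continuous_on_G[of T]] tau by (intro continuous_intros) auto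
  qed
  thus ?thesis by (simp add: algebra_simps)
qed

lemma exp_G_decay_le: "0 \<le> \<tau> \<Longrightarrow> \<tau> \<le> T \<Longrightarrow> exp (- (c / 2) * (G T - G \<tau>)) \<le> exp (- (c / 2) * (g 0 * (T - \<tau>)))"
  using G_increment_ge[of \<tau> T] c_pos by (simp add: mult_left_mono)

definition decay_weight :: "real \<Rightarrow> real \<Rightarrow> real" where
  "decay_weight T s = exp (- (c / 2) * (G T - G s)) * g s"

lemma decay_weight_has_integral:
  assumes "0 \<le> \<tau>" "\<tau> \<le> T"
  shows "(decay_weight T has_integral (2 / c) * (1 - exp (- (c / 2) * (G T - G \<tau>)))) {\<tau>..T}"
proof -
  define F where "F s = (2 / c) * exp (- (c / 2) * (G T - G s))" for s
  have "(decay_weight T has_integral (F T - F \<tau>)) {\<tau>..T}"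
  proof (rule fundamental_theorem_of_calculus[OF assms(2)])
    fix x assume x: "x \<in> {\<tau>..T}"
    have "(G has_real_derivative g x) (at x within {\<tau>..T})"
      by (rule DERIV_subset[OF G_has_derivative_within[of x T]]) (use x assms in auto)
    hence "(F has_real_derivative (2 / c) * (exp (- (c / 2) * (G T - G x)) * (- (c / 2) * (0 - g x))))
        (at x within {\<tau>..T})"
      unfolding F_def by (intro DERIV_cmult DERIV_chain2[OF DERIV_exp] DERIV_diff DERIV_const)
    moreover have "(2 / c) * (exp (- (c / 2) * (G T - G x)) * (- (c / 2) * (0 - g x))) = decay_weight T x"
      using c_pos by (simp add: decay_weight_def field_simps)
    ultimately show "(F has_vector_derivative decay_weight T x) (at x within {\<tau>..T})"
      by (simp add: has_real_derivative_iff_has_vector_derivative)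
  qed
  moreover have "F T - F \<tau> = (2 / c) * (1 - exp (- (c / 2) * (G T - G \<tau>)))"
    by (simp add: F_def algebra_simps)
  ultimately show ?thesis by simp
qed

lemma decay_weight_nonneg: "s \<ge> 0 \<Longrightarrow> decay_weight T s \<ge> 0"
  unfolding decay_weight_def using g_pos by (simp add: less_imp_le)

lemma continuous_on_decay_weight: "0 \<le> \<tau> \<Longrightarrow> continuous_on {\<tau>..T} (decay_weight T)"
  unfolding decay_weight_def
  using continuous_on_subset[OF continuous_on_G[of T], of "{\<tau>..T}"] continuous_on_subset[OF g_cont, of "{\<tau>..T}"]
  by (intro continuous_intros) auto


definition good_path :: "'a \<Rightarrow> bool" where
  "good_path \<omega> \<longleftrightarrow> B 0 \<omega> = 0 \<and> continuous_on {0..} (\<lambda>t. B t \<omega>) \<and> continuous_on {0..} (\<lambda>t. Y t \<omega>) \<and>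
     (\<forall>t\<ge>0. Y t \<omega> = y0 + B t \<omega> - integral {0..t} (\<lambda>s. g s *\<^sub>R DV (Y s \<omega>) + (1 / (r + s)) *\<^sub>R Y s \<omega>))"

lemma good_path_null_set:
  obtains N where "N \<in> null_sets M" "\<forall>\<omega>\<in>space M - N. good_path \<omega>"
proof -
  have "AE \<omega> in M. B 0 \<omega> = 0 \<and> continuous_on {0..} (\<lambda>t. B t \<omega>)"
    using BM by (simp add: std_brownian_motion_def)
  hence "AE \<omega> in M. good_path \<omega>" using Y_sol unfolding good_path_def by eventually_elim auto
  then obtain N where "{\<omega> \<in> space M. \<not> good_path \<omega>} \<subseteq> N" "N \<in> null_sets M"
    by (auto elim: AE_E3 simp: eventually_ae_filter)
  thus thesis using that by blast
qed

lemma pathwise_energy_bound: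
  assumes \<omega>: "good_path \<omega>" and tau: "0 \<le> \<tau>" "\<tau> \<le> T"
  shows "(norm (Y T \<omega> - (B T \<omega> - B \<tau> \<omega>)))\<^sup>2 \<le> exp (- (c / 2) * (G T - G \<tau>)) * (norm (Y \<tau> \<omega>))\<^sup>2
      + integral {\<tau>..T} (\<lambda>s. decay_weight T s * src (B s \<omega> - B \<tau> \<omega>))"
proof -
  note Bc = \<omega>[unfolded good_path_def, THEN conjunct2, THEN conjunct1]
  note Yc = \<omega>[unfolded good_path_def, THEN conjunct2, THEN conjunct2, THEN conjunct1]
  define F where "F s = g s *\<^sub>R DV (Y s \<omega>) + (1 / (r + s)) *\<^sub>R Y s \<omega>" for s
  \<comment> \<open>Subtracting the noise increment leaves a path Z that solves an ODE, driven by U.\<close>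
  define Z where "Z s = Y s \<omega> - (B s \<omega> - B \<tau> \<omega>)" for s
  define U where "U s = B s \<omega> - B \<tau> \<omega>" for s
  have F_cont: "continuous_on {0..b} F" for b
    unfolding F_def using continuous_on_subset[OF g_cont] continuous_on_subset[OF Yc] r_pos
    by (intro continuous_intros continuous_on_compose2[OF DV_cont, of _ "\<lambda>s. Y s \<omega>"]) auto
  have Z_eq: "Z s = y0 + B \<tau> \<omega> - integral {0..s} F" if "s \<ge> 0" for s
    using \<omega> that by (simp add: good_path_def Z_def F_def[abs_def])
  have Z_der: "(Z has_vector_derivative - (g s *\<^sub>R DV (Z s + U s) + (1 / (r + s)) *\<^sub>R (Z s + U s))) (at s)"
    if s: "s \<in> {\<tau><..<T}" for s
  proof -
    have s0: "s > 0" using s tau by auto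
    have "((\<lambda>u. integral {0..u} F) has_vector_derivative F s) (at s within {0..s+1})"
      by (rule integral_has_vector_derivative[OF F_cont]) (use s0 in auto)
    moreover have "at s within {0..s+1} = at s" using s0 by (intro at_within_Icc_at) auto
    ultimately have "((\<lambda>u. y0 + B \<tau> \<omega> - integral {0..u} F) has_vector_derivative 0 - F s) (at s)"
      by (intro has_vector_derivative_diff has_vector_derivative_const) simp
    hence "((\<lambda>u. y0 + B \<tau> \<omega> - integral {0..u} F) has_vector_derivative - F s) (at s)" by simp
    hence "(Z has_vector_derivative - F s) (at s)"
      by (rule has_vector_derivative_transform_within_open[where S = "{0<..}"]) (use s0 Z_eq in auto)
    thus ?thesis by (simp add: Z_def U_def F_def)
  qed
  have "(norm (Z T))\<^sup>2 \<le> exp (- (c / 2) * (G T - G \<tau>)) * (norm (Z \<tau>))\<^sup>2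
      + integral {\<tau>..T} (\<lambda>s. exp (- (c / 2) * (G T - G s)) * (g s * src (U s)))"
  proof (rule drift_energy_bound[OF dissipative c_pos K_nonneg r_pos g0_pos tau _ _ _ _ V_cont])
    show "\<forall>s\<in>{\<tau>..T}. g 0 \<le> g s" using g_ge_g0 tau by auto
    show "continuous_on {\<tau>..T} g" by (rule continuous_on_subset[OF g_cont]) (use tau in auto)
    show "\<forall>s\<in>{\<tau><..<T}. (G has_real_derivative g s) (at s)" using G_has_derivative tau by auto
    show "continuous_on {\<tau>..T} G" by (rule continuous_on_subset[OF continuous_on_G[of T]]) (use tau in auto)
    show "continuous_on {\<tau>..T} U" "continuous_on {\<tau>..T} Z" unfolding U_def Z_def
      using continuous_on_subset[OF Bc, of "{\<tau>..T}"] continuous_on_subset[OF Yc, of "{\<tau>..T}"] tau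
      by (auto intro!: continuous_intros)
  qed (use Z_der in blast)
  thus ?thesis by (simp add: U_def Z_def decay_weight_def mult.assoc)
qed

lemma pathwise_step_bound:
  assumes \<omega>: "good_path \<omega>" and tau: "0 \<le> \<tau>" "\<tau> \<le> T" and \<epsilon>: "\<epsilon> > 0"
  shows "(norm (Y T \<omega>))\<^sup>2 \<le> (1 + \<epsilon>) * exp (- (c / 2) * (G T - G \<tau>)) * (norm (Y \<tau> \<omega>))\<^sup>2
      + (1 + \<epsilon>) * integral {\<tau>..T} (\<lambda>s. decay_weight T s * src (B s \<omega> - B \<tau> \<omega>))
      + (1 + 1 / \<epsilon>) * (norm (B T \<omega> - B \<tau> \<omega>))\<^sup>2"
proof -
  have "(norm (Y T \<omega>))\<^sup>2 \<le> (1 + \<epsilon>) * (norm (Y T \<omega> - (B T \<omega> - B \<tau> \<omega>)))\<^sup>2 + (1 + 1 / \<epsilon>) * (norm (B T \<omega> - B \<tau> \<omega>))\<^sup>2"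
    using power2_norm_add_le[OF \<epsilon>, of "Y T \<omega> - (B T \<omega> - B \<tau> \<omega>)" "B T \<omega> - B \<tau> \<omega>"] by simp
  also have "\<dots> \<le> (1 + \<epsilon>) * (exp (- (c / 2) * (G T - G \<tau>)) * (norm (Y \<tau> \<omega>))\<^sup>2
      + integral {\<tau>..T} (\<lambda>s. decay_weight T s * src (B s \<omega> - B \<tau> \<omega>))) + (1 + 1 / \<epsilon>) * (norm (B T \<omega> - B \<tau> \<omega>))\<^sup>2"
    using pathwise_energy_bound[OF \<omega> tau] \<epsilon> by (intro add_mono mult_left_mono) auto
  finally show ?thesis by (simp add: algebra_simps)
qed


text \<open>B_reg N is a modification of B, defined for all real times, whose paths are continuous
  everywhere; it makes the time integral of the source jointly measurable.\<close>

definition B_reg :: "'a set \<Rightarrow> real \<Rightarrow> 'a \<Rightarrow> 'd" where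
  "B_reg N t \<omega> = (if \<omega> \<in> space M - N then B (max 0 t) \<omega> else 0)"

definition source_integral :: "'a set \<Rightarrow> real \<Rightarrow> real \<Rightarrow> 'a \<Rightarrow> ennreal" where
  "source_integral N \<tau> T \<omega> =
     (\<integral>\<^sup>+s. ennreal (decay_weight T s * src (B_reg N s \<omega> - B_reg N \<tau> \<omega>)) * indicator {\<tau>..T} s \<partial>lborel)"

lemma source_integral_eq:
  assumes \<omega>: "\<omega> \<in> space M - N" "good_path \<omega>" and tau: "0 \<le> \<tau>" "\<tau> \<le> T"
  shows "source_integral N \<tau> T \<omega> = ennreal (integral {\<tau>..T} (\<lambda>s. decay_weight T s * src (B s \<omega> - B \<tau> \<omega>)))"
    and "integral {\<tau>..T} (\<lambda>s. decay_weight T s * src (B s \<omega> - B \<tau> \<omega>)) \<ge> 0"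
proof -
  define h where "h s = decay_weight T s * src (B s \<omega> - B \<tau> \<omega>)" for s
  have "continuous_on {0..} (\<lambda>t. B t \<omega>)" using \<omega>(2) by (simp add: good_path_def)
  hence "continuous_on {\<tau>..T} (\<lambda>s. B s \<omega> - B \<tau> \<omega>)"
    using tau by (auto intro!: continuous_intros intro: continuous_on_subset)
  hence "continuous_on {\<tau>..T} (\<lambda>s. src (B s \<omega> - B \<tau> \<omega>))"
    by (rule continuous_on_compose2[OF continuous_on_energy_source[OF V_cont]]) auto
  hence "continuous_on {\<tau>..T} h"
    unfolding h_def by (intro continuous_on_mult continuous_on_decay_weight tau(1))
  hence hI: "(h has_integral integral {\<tau>..T} h) {\<tau>..T}"
    by (rule integrable_integral[OF integrable_continuous_real])
  have h_nonneg: "h s \<ge> 0" if "s \<in> {\<tau>..T}" for s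
    unfolding h_def using decay_weight_nonneg[of s T] src_nonneg that tau by simp
  from has_integral_nonneg[OF hI h_nonneg]
  show "integral {\<tau>..T} (\<lambda>s. decay_weight T s * src (B s \<omega> - B \<tau> \<omega>)) \<ge> 0"
    by (simp add: h_def[abs_def])
  from hI h_nonneg have "(\<integral>\<^sup>+s. ennreal (h s) * indicator {\<tau>..T} s \<partial>lborel) = ennreal (integral {\<tau>..T} h)"
    by (intro nn_integral_has_integral_lebesgue') auto
  moreover have "source_integral N \<tau> T \<omega> = (\<integral>\<^sup>+s. ennreal (h s) * indicator {\<tau>..T} s \<partial>lborel)"
    unfolding source_integral_def
    by (rule nn_integral_cong) (use \<omega>(1) tau in \<open>auto simp: B_reg_def h_def indicator_def\<close>)
  ultimately show "source_integral N \<tau> T \<omega> = ennreal (integral {\<tau>..T} (\<lambda>s. decay_weight T s * src (B s \<omega> - B \<tau> \<omega>)))"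
    by (simp add: h_def[abs_def])
qed

lemma B_reg_measurable: "N \<in> sets M \<Longrightarrow> B_reg N t \<in> borel_measurable M"
  unfolding B_reg_def by (rule measurable_If_set) (use B_measurable in auto)

lemma B_reg_jointly_measurable:
  assumes "N \<in> null_sets M" "\<forall>\<omega>\<in>space M - N. good_path \<omega>"
  shows "(\<lambda>p. B_reg N (snd p) (fst p)) \<in> borel_measurable (M \<Otimes>\<^sub>M lborel)"
proof (rule borel_measurable_continuous_process)
  show "B_reg N t \<in> borel_measurable M" for t using assms(1) by (auto intro: B_reg_measurable)
  show "continuous_on UNIV (\<lambda>t. B_reg N t \<omega>)" for \<omega>
  proof (cases "\<omega> \<in> space M - N")
    case True
    hence "continuous_on {0..} (\<lambda>t. B t \<omega>)" using assms(2) by (simp add: good_path_def)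
    hence "continuous_on UNIV (\<lambda>t. B (max 0 t) \<omega>)"
      by (rule continuous_on_compose2) (auto intro!: continuous_intros)
    thus ?thesis using True by (simp add: B_reg_def)
  next
    case False
    hence "(\<lambda>t. B_reg N t \<omega>) = (\<lambda>t. 0)" by (auto simp: B_reg_def)
    thus ?thesis by (simp only: continuous_on_const)
  qed
qed

lemma source_integrand_measurable:
  assumes N: "N \<in> null_sets M" "\<forall>\<omega>\<in>space M - N. good_path \<omega>" and tau: "0 \<le> \<tau>"
  shows "(\<lambda>(\<omega>, s). ennreal (decay_weight T s * src (B_reg N s \<omega> - B_reg N \<tau> \<omega>)) * indicator {\<tau>..T} s)
    \<in> borel_measurable (M \<Otimes>\<^sub>M lborel)"
proof -
  let ?S = "{\<tau>..T}"
  have "(\<lambda>p. B_reg N (snd p) (fst p) - B_reg N \<tau> (fst p)) \<in> borel_measurable (M \<Otimes>\<^sub>M lborel)"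
    using B_reg_jointly_measurable[OF N] B_reg_measurable[of N \<tau>] N(1)
    by (intro borel_measurable_diff measurable_compose[OF measurable_fst]) auto
  hence src_m: "(\<lambda>p. src (B_reg N (snd p) (fst p) - B_reg N \<tau> (fst p))) \<in> borel_measurable (M \<Otimes>\<^sub>M lborel)"
    by (rule measurable_compose[OF _ borel_measurable_src])
  have "(\<lambda>s. decay_weight T s * indicator ?S s) \<in> borel_measurable borel"
    using borel_measurable_continuous_on_indicator[OF _ continuous_on_decay_weight[OF tau], of T]
    by (simp add: mult.commute)
  hence w_m: "(\<lambda>p. decay_weight T (snd p) * indicator ?S (snd p)) \<in> borel_measurable (M \<Otimes>\<^sub>M lborel)"
    by (intro measurable_compose[OF measurable_snd]) simp
  have "(\<lambda>p. ennreal (decay_weight T (snd p) * indicator ?S (snd p)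
      * src (B_reg N (snd p) (fst p) - B_reg N \<tau> (fst p)))) \<in> borel_measurable (M \<Otimes>\<^sub>M lborel)"
    by (rule measurable_compose[OF borel_measurable_times[OF w_m src_m] measurable_ennreal])
  moreover have "(\<lambda>(\<omega>, s). ennreal (decay_weight T s * src (B_reg N s \<omega> - B_reg N \<tau> \<omega>)) * indicator ?S s)
      = (\<lambda>p. ennreal (decay_weight T (snd p) * indicator ?S (snd p)
          * src (B_reg N (snd p) (fst p) - B_reg N \<tau> (fst p))))"
    by (auto simp: indicator_def fun_eq_iff)
  ultimately show ?thesis by simp
qed

lemma source_integral_expectation:
  assumes tau: "0 \<le> \<tau>" "\<tau> \<le> T" "T \<le> \<tau> + 1"
    and N: "N \<in> null_sets M" "\<forall>\<omega>\<in>space M - N. good_path \<omega>"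
    and A: "A \<ge> 0" "\<And>u. src u \<le> A * exp ((norm u)\<^sup>2 / 4)"
  shows "source_integral N \<tau> T \<in> borel_measurable M"
    and "(\<integral>\<^sup>+\<omega>. source_integral N \<tau> T \<omega> \<partial>M) \<le> ennreal ((2 / c) * (A * 2 powr (real DIM('d) / 2)))"
proof -
  interpret P: pair_sigma_finite M lborel by standard
  let ?S = "{\<tau>..T}"
  define f where "f \<omega> s = ennreal (decay_weight T s * src (B_reg N s \<omega> - B_reg N \<tau> \<omega>)) * indicator ?S s" for \<omega> s
  have fm: "case_prod f \<in> borel_measurable (M \<Otimes>\<^sub>M lborel)"
    unfolding f_def using source_integrand_measurable[OF N tau(1)] by simp
  show "source_integral N \<tau> T \<in> borel_measurable M"
    using lborel.borel_measurable_nn_integral[OF fm] by (simp add: f_def source_integral_def[abs_def])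
  define C where "C = A * 2 powr (real DIM('d) / 2)"
  have inner: "(\<integral>\<^sup>+\<omega>. f \<omega> s \<partial>M) \<le> ennreal (decay_weight T s) * indicator ?S s * ennreal C" for s
  proof (cases "s \<in> ?S")
    case True
    have "(\<integral>\<^sup>+\<omega>. f \<omega> s \<partial>M) = (\<integral>\<^sup>+\<omega>. ennreal (decay_weight T s) * ennreal (src (B s \<omega> - B \<tau> \<omega>)) \<partial>M)"
    proof (rule nn_integral_cong_AE)
      show "AE \<omega> in M. f \<omega> s = ennreal (decay_weight T s) * ennreal (src (B s \<omega> - B \<tau> \<omega>))"
        using AE_not_in[OF N(1)] AE_space by eventually_elim
          (use True tau decay_weight_nonneg[of s T] src_nonneg in \<open>auto simp: f_def B_reg_def ennreal_mult\<close>)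
    qed
    also have "\<dots> = ennreal (decay_weight T s) * (\<integral>\<^sup>+\<omega>. ennreal (src (B s \<omega> - B \<tau> \<omega>)) \<partial>M)"
      using B_measurable[of s] B_measurable[of \<tau>] True tau
      by (intro nn_integral_cmult measurable_compose[OF _ measurable_ennreal]
          measurable_compose[OF _ borel_measurable_src] borel_measurable_diff) auto
    also have "\<dots> \<le> ennreal (decay_weight T s) * ennreal C"
      unfolding C_def using True tau A
      by (intro mult_left_mono increment_moment_bound borel_measurable_src) auto
    finally show ?thesis using True by simp
  qed (simp add: f_def)
  have "(\<integral>\<^sup>+\<omega>. source_integral N \<tau> T \<omega> \<partial>M) = (\<integral>\<^sup>+s. (\<integral>\<^sup>+\<omega>. f \<omega> s \<partial>M) \<partial>lborel)"
    unfolding source_integral_def f_def[symmetric] by (rule P.Fubini'[OF fm, symmetric])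
  also have "\<dots> \<le> (\<integral>\<^sup>+s. ennreal (decay_weight T s) * indicator ?S s * ennreal C \<partial>lborel)"
    by (rule nn_integral_mono) (rule inner)
  also have "\<dots> = (\<integral>\<^sup>+s. ennreal (decay_weight T s) * indicator ?S s \<partial>lborel) * ennreal C"
  proof (rule nn_integral_multc)
    have "(\<lambda>s. decay_weight T s * indicator ?S s) \<in> borel_measurable borel"
      using borel_measurable_continuous_on_indicator[OF _ continuous_on_decay_weight[OF tau(1)], of T]
      by (simp add: mult.commute)
    hence "(\<lambda>s. ennreal (decay_weight T s * indicator ?S s)) \<in> borel_measurable lborel"
      using measurable_compose[OF _ measurable_ennreal] by simp
    moreover have "(\<lambda>s. ennreal (decay_weight T s * indicator ?S s)) = (\<lambda>s. ennreal (decay_weight T s) * indicator ?S s)"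
      by (auto simp: indicator_def fun_eq_iff)
    ultimately show "(\<lambda>s. ennreal (decay_weight T s) * indicator ?S s) \<in> borel_measurable lborel" by simp
  qed
  also have "\<dots> = ennreal ((2 / c) * (1 - exp (- (c / 2) * (G T - G \<tau>)))) * ennreal C"
    using decay_weight_nonneg tau
    by (subst nn_integral_has_integral_lebesgue'[OF _ decay_weight_has_integral[OF tau(1,2)]]) auto
  also have "\<dots> \<le> ennreal (2 / c) * ennreal C"
    using c_pos by (intro mult_right_mono ennreal_leI mult_left_le) auto
  also have "\<dots> = ennreal ((2 / c) * C)"
    by (rule ennreal_mult[symmetric]) (use c_pos A(1) in \<open>auto simp: C_def\<close>)
  finally show "(\<integral>\<^sup>+\<omega>. source_integral N \<tau> T \<omega> \<partial>M) \<le> ennreal ((2 / c) * (A * 2 powr (real DIM('d) / 2)))"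
    by (simp add: C_def)
qed


definition second_moment :: "real \<Rightarrow> ennreal" where
  "second_moment t = (\<integral>\<^sup>+\<omega>. ennreal ((norm (Y t \<omega>))\<^sup>2) \<partial>M)"

lemma second_moment_step:
  assumes tau: "0 \<le> \<tau>" "\<tau> \<le> T" "T \<le> \<tau> + 1" and \<epsilon>: "\<epsilon> > 0"
    and A: "A \<ge> 0" "\<And>u. src u \<le> A * exp ((norm u)\<^sup>2 / 4)"
  shows "second_moment T \<le> ennreal ((1 + \<epsilon>) * exp (- (c / 2) * (G T - G \<tau>))) * second_moment \<tau>
      + ennreal ((1 + \<epsilon>) * ((2 / c) * (A * 2 powr (real DIM('d) / 2))) + (1 + 1 / \<epsilon>) * (4 * 2 powr (real DIM('d) / 2)))"
proof -
  obtain N where N: "N \<in> null_sets M" "\<forall>\<omega>\<in>space M - N. good_path \<omega>" by (rule good_path_null_set)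
  define \<rho> where "\<rho> = (1 + \<epsilon>) * exp (- (c / 2) * (G T - G \<tau>))"
  define C1 where "C1 = (2 / c) * (A * 2 powr (real DIM('d) / 2))"
  define C2 where "C2 = 4 * 2 powr (real DIM('d) / 2)"
  have C: "C1 \<ge> 0" "C2 \<ge> 0" "\<rho> \<ge> 0" using c_pos A(1) \<epsilon> by (simp_all add: C1_def C2_def \<rho>_def)
  let ?\<Phi> = "source_integral N \<tau> T"
  let ?dB = "\<lambda>\<omega>. ennreal ((norm (B T \<omega> - B \<tau> \<omega>))\<^sup>2)"
  have \<Phi>: "?\<Phi> \<in> borel_measurable M" "(\<integral>\<^sup>+\<omega>. ?\<Phi> \<omega> \<partial>M) \<le> ennreal C1"
    using source_integral_expectation[OF tau N A] by (simp_all add: C1_def)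
  have [measurable]: "B T \<in> borel_measurable M" "B \<tau> \<in> borel_measurable M" "Y \<tau> \<in> borel_measurable M"
    using B_measurable Y_meas tau by auto
  have "AE \<omega> in M. ennreal ((norm (Y T \<omega>))\<^sup>2)
      \<le> ennreal \<rho> * ennreal ((norm (Y \<tau> \<omega>))\<^sup>2) + ennreal (1 + \<epsilon>) * ?\<Phi> \<omega> + ennreal (1 + 1 / \<epsilon>) * ?dB \<omega>"
    using AE_not_in[OF N(1)] AE_space
  proof eventually_elim
    case (elim \<omega>)
    hence \<omega>: "\<omega> \<in> space M - N" "good_path \<omega>" using N(2) by auto
    define I where "I = integral {\<tau>..T} (\<lambda>s. decay_weight T s * src (B s \<omega> - B \<tau> \<omega>))"
    have \<Phi>I: "?\<Phi> \<omega> = ennreal I" and "I \<ge> 0"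
      unfolding I_def by (rule source_integral_eq[OF \<omega> tau(1,2)])+
    hence "ennreal ((norm (Y T \<omega>))\<^sup>2) \<le> ennreal (\<rho> * (norm (Y \<tau> \<omega>))\<^sup>2 + (1 + \<epsilon>) * I + (1 + 1 / \<epsilon>) * (norm (B T \<omega> - B \<tau> \<omega>))\<^sup>2)"
      using pathwise_step_bound[OF \<omega>(2) tau(1,2) \<epsilon>] by (intro ennreal_leI) (simp add: \<rho>_def I_def)
    also have "\<dots> = ennreal \<rho> * ennreal ((norm (Y \<tau> \<omega>))\<^sup>2) + ennreal (1 + \<epsilon>) * ennreal I + ennreal (1 + 1 / \<epsilon>) * ?dB \<omega>"
      using C \<epsilon> \<open>I \<ge> 0\<close> by (simp add: ennreal_plus[symmetric] ennreal_mult[symmetric] del: ennreal_plus)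
    finally show ?case by (simp add: \<Phi>I)
  qed
  hence "second_moment T \<le> (\<integral>\<^sup>+\<omega>. ennreal \<rho> * ennreal ((norm (Y \<tau> \<omega>))\<^sup>2) + ennreal (1 + \<epsilon>) * ?\<Phi> \<omega>
      + ennreal (1 + 1 / \<epsilon>) * ?dB \<omega> \<partial>M)"
    unfolding second_moment_def by (rule nn_integral_mono_AE)
  also have "\<dots> = ennreal \<rho> * second_moment \<tau> + ennreal (1 + \<epsilon>) * (\<integral>\<^sup>+\<omega>. ?\<Phi> \<omega> \<partial>M)
      + ennreal (1 + 1 / \<epsilon>) * (\<integral>\<^sup>+\<omega>. ?dB \<omega> \<partial>M)"
    using \<Phi>(1) by (simp add: second_moment_def nn_integral_add nn_integral_cmult)
  also have "\<dots> \<le> ennreal \<rho> * second_moment \<tau> + ennreal (1 + \<epsilon>) * ennreal C1 + ennreal (1 + 1 / \<epsilon>) * ennreal C2"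
  proof -
    have "(\<integral>\<^sup>+\<omega>. ?dB \<omega> \<partial>M) \<le> ennreal C2"
      unfolding C2_def
    proof (rule increment_moment_bound[OF tau])
      fix u :: 'd
      have "1 + (norm u)\<^sup>2 / 4 \<le> exp ((norm u)\<^sup>2 / 4)" by (rule exp_ge_add_one_self)
      thus "(norm u)\<^sup>2 \<le> 4 * exp ((norm u)\<^sup>2 / 4)" by linarith
    qed simp_all
    thus ?thesis using \<Phi>(2) by (intro add_mono mult_left_mono order_refl) auto
  qed
  also have "\<dots> = ennreal \<rho> * second_moment \<tau> + ennreal ((1 + \<epsilon>) * C1 + (1 + 1 / \<epsilon>) * C2)"
    using C \<epsilon> by (simp add: ennreal_plus ennreal_mult add.assoc)
  finally show ?thesis by (simp add: \<rho>_def C1_def C2_def)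
qed

lemma second_moment_0: "second_moment 0 = ennreal ((norm y0)\<^sup>2)"
proof -
  obtain N where N: "N \<in> null_sets M" "\<forall>\<omega>\<in>space M - N. good_path \<omega>" by (rule good_path_null_set)
  have "AE \<omega> in M. Y 0 \<omega> = y0"
    using AE_not_in[OF N(1)] AE_space by eventually_elim (use N(2) in \<open>auto simp: good_path_def\<close>)
  hence "second_moment 0 = (\<integral>\<^sup>+\<omega>. ennreal ((norm y0)\<^sup>2) \<partial>M)"
    unfolding second_moment_def by (intro nn_integral_cong_AE) auto
  thus ?thesis by (simp add: emeasure_space_1)
qed

text \<open>Over one unit of time the factor exp (-(c/2)(G T - G \<tau>)) is at most exp (-(c/2) g 0) < 1;
  choosing \<epsilon> so that (1 + \<epsilon>) times it is still below 1 makes the step a contraction.\<close>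

theorem second_moment_bounded: "(SUP t\<in>{0..}. second_moment t) < \<infinity>"
proof -
  obtain A where A: "A \<ge> 0" "\<And>u. src u \<le> A * exp ((norm u)\<^sup>2 / 4)"
    using src_gaussian_growth by blast
  define \<rho> where "\<rho> = exp (- (c / 2) * g 0)"
  have \<rho>: "0 < \<rho>" "\<rho> < 1" using c_pos g0_pos by (auto simp: \<rho>_def)
  define \<epsilon> where "\<epsilon> = (1 - \<rho>) / (2 * \<rho>)"
  have "(1 + \<epsilon>) * \<rho> = (1 + \<rho>) / 2" using \<rho> by (simp add: \<epsilon>_def field_simps)
  hence \<epsilon>: "\<epsilon> > 0" "(1 + \<epsilon>) * \<rho> < 1" using \<rho> by (simp_all add: \<epsilon>_def)
  define C where "C = (1 + \<epsilon>) * ((2 / c) * (A * 2 powr (real DIM('d) / 2))) + (1 + 1 / \<epsilon>) * (4 * 2 powr (real DIM('d) / 2))"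
  have C: "C \<ge> 0" unfolding C_def using \<epsilon> c_pos A(1) by (intro add_nonneg_nonneg mult_nonneg_nonneg) auto
  have step: "second_moment t \<le> ennreal ((1 + \<epsilon>) * exp (- (c / 2) * (G t - G \<tau>))) * second_moment \<tau> + ennreal C"
    if "0 \<le> \<tau>" "\<tau> \<le> t" "t \<le> \<tau> + 1" for \<tau> t
    unfolding C_def by (rule second_moment_step[OF that \<epsilon>(1) A])
  show ?thesis
  proof (rule SUP_bounded_of_unit_step_contraction[where q = "(1 + \<epsilon>) * \<rho>"])
    fix t :: real assume t: "0 \<le> t" "t \<le> 1"
    have "0 \<le> g 0 * (t - 0)" using g0_pos t by simp
    hence "0 \<le> G t - G 0" using G_increment_ge[of 0 t] t by linarith
    hence "exp (- (c / 2) * (G t - G 0)) \<le> 1" using c_pos by simp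
    hence "ennreal ((1 + \<epsilon>) * exp (- (c / 2) * (G t - G 0))) \<le> ennreal (1 + \<epsilon>)"
      using \<epsilon> by (intro ennreal_leI) (simp add: mult_le_cancel_left1)
    hence "ennreal ((1 + \<epsilon>) * exp (- (c / 2) * (G t - G 0))) * second_moment 0 + ennreal C
        \<le> ennreal (1 + \<epsilon>) * second_moment 0 + ennreal C"
      by (intro add_mono mult_right_mono order_refl) auto
    moreover have "second_moment t \<le> ennreal ((1 + \<epsilon>) * exp (- (c / 2) * (G t - G 0))) * second_moment 0 + ennreal C"
      using step[of 0 t] t by simp
    ultimately have "second_moment t \<le> ennreal (1 + \<epsilon>) * second_moment 0 + ennreal C"
      by (rule order_trans[rotated])
    also have "\<dots> = ennreal ((1 + \<epsilon>) * (norm y0)\<^sup>2 + C)"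
      using \<epsilon> C by (simp add: second_moment_0 ennreal_mult ennreal_plus)
    finally show "second_moment t \<le> ennreal ((1 + \<epsilon>) * (norm y0)\<^sup>2 + C)" .
  next
    fix t :: real assume t: "1 < t"
    have "exp (- (c / 2) * (G t - G (t - 1))) \<le> \<rho>"
      using exp_G_decay_le[of "t - 1" t] t by (simp add: \<rho>_def)
    hence "ennreal ((1 + \<epsilon>) * exp (- (c / 2) * (G t - G (t - 1)))) \<le> ennreal ((1 + \<epsilon>) * \<rho>)"
      using \<epsilon> by (intro ennreal_leI mult_left_mono) auto
    hence "ennreal ((1 + \<epsilon>) * exp (- (c / 2) * (G t - G (t - 1)))) * second_moment (t - 1) + ennreal C
        \<le> ennreal ((1 + \<epsilon>) * \<rho>) * second_moment (t - 1) + ennreal C"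
      by (intro add_mono mult_right_mono order_refl) auto
    moreover have "second_moment t
        \<le> ennreal ((1 + \<epsilon>) * exp (- (c / 2) * (G t - G (t - 1)))) * second_moment (t - 1) + ennreal C"
      using step[of "t - 1" t] t by simp
    ultimately show "second_moment t \<le> ennreal ((1 + \<epsilon>) * \<rho>) * second_moment (t - 1) + ennreal C"
      by (rule order_trans[rotated])
  qed (use \<epsilon> \<rho> C in auto)
qed

end

theorem mainTheorem16:
  fixes M :: "'a measure" and B :: "real \<Rightarrow> 'a \<Rightarrow> 'd::euclidean_space"
    and V W chi :: "'d \<Rightarrow> real" and DV DW Dchi :: "'d \<Rightarrow> 'd"
    and D2V D2W :: "'d \<Rightarrow> ('d \<Rightarrow>\<^sub>L 'd)"
    and c a r :: real and g g' :: "real \<Rightarrow> real"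
    and x :: 'd and \<mu> :: "'d measure" and Y :: "real \<Rightarrow> 'a \<Rightarrow> 'd"
  assumes BM: "std_brownian_motion M B"
    and V_nonneg: "\<forall>y. V y \<ge> 0"
    and V_grad: "\<forall>y. (V has_derivative (\<lambda>h. DV y \<bullet> h)) (at y)"
    and V_hess: "\<forall>y. (DV has_derivative blinfun_apply (D2V y)) (at y)"
    and V_hess_cont: "continuous_on UNIV D2V"
    and V_decomp: "\<forall>y. V y = W y + chi y"
    and W_grad: "\<forall>y. (W has_derivative (\<lambda>h. DW y \<bullet> h)) (at y)"
    and W_hess: "\<forall>y. (DW has_derivative blinfun_apply (D2W y)) (at y)"
    and c_pos: "c > 0"
    and W_convex: "\<forall>y h. c * (norm h)\<^sup>2 \<le> h \<bullet> blinfun_apply (D2W y) h"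
    and chi_grad: "\<forall>y. (chi has_derivative (\<lambda>h. Dchi y \<bullet> h)) (at y)"
    and chi_supp: "compact (closure {y. chi y \<noteq> 0})"
    and chi_lip: "\<exists>L. \<forall>y z. norm (Dchi y - Dchi z) \<le> L * dist y z"
    and a_pos: "a > 0"
    and lap_bound: "\<forall>y. laplacian_of (D2V y) \<le> a * (1 + V y)"
    and grad_growth: "filterlim (\<lambda>y. (norm (DV y))\<^sup>2 / V y) at_top at_infinity"
    and crit_finite: "finite {y. DV y = 0}"
    and min_nondeg: "\<forall>y. DV y = 0 \<and> is_local_min V y \<longrightarrow>
                        (\<forall>h. h \<noteq> 0 \<longrightarrow> h \<bullet> blinfun_apply (D2V y) h > 0)"
    and saddle_neg: "\<forall>y. DV y = 0 \<and> \<not> is_local_min V y \<longrightarrow>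
                        (\<exists>ev v. ev < 0 \<and> v \<noteq> 0 \<and> blinfun_apply (D2V y) v = ev *\<^sub>R v)"
    and g_deriv: "\<forall>t\<ge>0. (g has_real_derivative g' t) (at t within {0..})"
    and g'_cont: "continuous_on {0..} g'"
    and g_pos: "\<forall>t\<ge>0. g t > 0"
    and g_mono: "mono_on {0..} g"
    and g_lim: "filterlim g at_top at_top"
    and g_ratio: "((\<lambda>t. g' t / (g t)\<^sup>2) \<longlongrightarrow> 0) at_top"
    and r_pos: "r > 0"
    and mu_prob: "prob_space \<mu>" and mu_sets: "sets \<mu> = sets borel"
    and mu_mean: "integrable \<mu> (\<lambda>z. z)"
    and Y_meas: "\<forall>t\<ge>0. Y t \<in> borel_measurable M"
    and Y_sol: "AE \<omega> in M. continuous_on {0..} (\<lambda>t. Y t \<omega>) \<and>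
        (\<forall>t\<ge>0. Y t \<omega> = (x - (\<integral>z. z \<partial>\<mu>)) + B t \<omega>
            - integral {0..t} (\<lambda>s. g s *\<^sub>R DV (Y s \<omega>) + (1 / (r + s)) *\<^sub>R Y s \<omega>))"
  shows "(SUP t\<in>{0..}. \<integral>\<^sup>+ \<omega>. ennreal ((norm (Y t \<omega>))\<^sup>2) \<partial>M) < \<infinity>"
proof -
  interpret potential: convex_plus_compact_potential V W chi DV DW Dchi D2V D2W c a
    by unfold_locales fact+
  obtain S K where SK: "S \<ge> 0" "K \<ge> 0"
    "\<forall>y u. (y - u) \<bullet> DV y \<ge> c / 2 * (norm (y - u))\<^sup>2 - K * norm (y - u) - V u - 2 * S"
    using potential.gradient_dissipative by blast
  obtain CV kV where CV: "CV \<ge> 0" "\<forall>y. V y \<le> CV * exp (kV * norm y)"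
    using potential.V_exp_growth by blast
  have "continuous_on UNIV V" "continuous_on UNIV DV"
    using V_grad V_hess has_derivative_continuous by (metis continuous_at_imp_continuous_on)+
  moreover have "continuous_on {0..} g"
    using g_deriv DERIV_continuous by (fastforce simp: continuous_on_eq_continuous_within)
  ultimately interpret sde: additive_noise_sde M B Y V DV g r c K S CV kV "x - (\<integral>z. z \<partial>\<mu>)"
    using BM SK c_pos V_nonneg CV g_pos g_mono r_pos Y_meas Y_sol by unfold_locales auto
  show ?thesis using sde.second_moment_bounded by (simp add: sde.second_moment_def)
qed

end
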